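(* Let $\rho$ be a law invariant risk measure with induced divergence $\alpha$. The following are equivalent: (1) $\alpha$ is jointly convex, i.e. $(\nu,\mu)\mapsto\alpha(\nu|\mu)$ is convex on $\mathcal P(E)\times\mathcal P(E)$ for each Polish space $E$; (2) for each Polish space $E$ and each $f\in B(E)$, the map $\mathcal P(E)\ni\mu\mapsto\rho_\mu(f)$ is concave; (3) $\tilde\rho$ is concave.
   Context: $(\Omega,\mathcal F,P)$ is a fixed nonatomic standard Borel probability space, $L^\infty=L^\infty(\Omega,\mathcal F,P)$. A risk measure is a convex $\rho:L^\infty\to\mathbb R$ that is monotone ($X\le Y$ a.s. implies $\rho(X)\le\rho(Y)$), cash additive ($\rho(X+c)=\rho(X)+c$, $c\in\mathbb R$) and normalized ($\rho(0)=0$); it is law invariant if $\rho(X)=\rho(Y)$ whenever $X,Y$ have the same law. For a Polish space $E$, $\mathcal P(E)$ is the set of Borel probability measures and $B(E)$ the bounded measurable real functions. For Polish $E$ and $\mu\in\mathcal P(E)$, $\rho_\mu(f):=\rho(f(X))$ for $f\in B(E)$, where $X:\Omega\to E$ is any measurable map with $P\circ X^{-1}=\mu$. The induced divergence is $\alpha(\nu|\mu):=\sup_{f\in B(E)}(\int_E f\,d\nu-\rho_\mu(f))$. The function $\tilde\rho$ is defined on the set of compactly supported Borel probability measures on $\mathbb R$ by $\tilde\rho(P\circ X^{-1}):=\rho(X)$ for $X\in L^\infty$. *)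

theory Defs
  imports "HOL-Probability.Probability"
begin

definition Polish_space :: "'a topology \<Rightarrow> bool" where
  "Polish_space T \<longleftrightarrow> completely_metrizable_space T \<and> separable_space T"

definition borel_of :: "'a topology \<Rightarrow> 'a measure" where
  "borel_of T = sigma (topspace T) {U. openin T U}"

definition prob_measures :: "'a topology \<Rightarrow> 'a measure set" where
  "prob_measures T = {\<mu>. prob_space \<mu> \<and> sets \<mu> = sets (borel_of T)}"

definition bounded_borel_funs :: "'a topology \<Rightarrow> ('a \<Rightarrow> real) set" where
  "bounded_borel_funs T =
     {f. f \<in> borel_measurable (borel_of T) \<and> bounded (f ` topspace T)}"

definition mix_measure :: "real \<Rightarrow> 'a measure \<Rightarrow> 'a measure \<Rightarrow> 'a measure" where
  "mix_measure t \<mu> \<nu> = measure_of (space \<mu>) (sets \<mu>)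
      (\<lambda>A. ennreal t * emeasure \<mu> A + ennreal (1 - t) * emeasure \<nu> A)"

definition nonatomic :: "'w measure \<Rightarrow> bool" where
  "nonatomic M \<longleftrightarrow> (\<forall>A\<in>sets M. measure M A > 0 \<longrightarrow>
      (\<exists>B\<in>sets M. B \<subseteq> A \<and> 0 < measure M B \<and> measure M B < measure M A))"

definition standard_borel :: "'w measure \<Rightarrow> bool" where
  "standard_borel M \<longleftrightarrow> (\<exists>T. Polish_space T \<and> topspace T = space M \<and>
      sets M = sets (borel_of T))"

text \<open>L-infinity, represented by essentially bounded measurable functions
  (a risk measure is a function on these; by monotonicity it respects a.e. equality).\<close>
definition Linf :: "'w measure \<Rightarrow> ('w \<Rightarrow> real) set" where
  "Linf M = {X. X \<in> borel_measurable M \<and> (\<exists>C. AE \<omega> in M. \<bar>X \<omega>\<bar> \<le> C)}"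

definition risk_measure :: "'w measure \<Rightarrow> (('w \<Rightarrow> real) \<Rightarrow> real) \<Rightarrow> bool" where
  "risk_measure M \<rho> \<longleftrightarrow>
     (\<forall>X\<in>Linf M. \<forall>Y\<in>Linf M. \<forall>t\<in>{0..1::real}.
        \<rho> (\<lambda>\<omega>. t * X \<omega> + (1 - t) * Y \<omega>) \<le> t * \<rho> X + (1 - t) * \<rho> Y)
   \<and> (\<forall>X\<in>Linf M. \<forall>Y\<in>Linf M. (AE \<omega> in M. X \<omega> \<le> Y \<omega>) \<longrightarrow> \<rho> X \<le> \<rho> Y)
   \<and> (\<forall>X\<in>Linf M. \<forall>c. \<rho> (\<lambda>\<omega>. X \<omega> + c) = \<rho> X + c)
   \<and> \<rho> (\<lambda>\<omega>. 0) = 0"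

definition law_invariant :: "'w measure \<Rightarrow> (('w \<Rightarrow> real) \<Rightarrow> real) \<Rightarrow> bool" where
  "law_invariant M \<rho> \<longleftrightarrow> (\<forall>X\<in>Linf M. \<forall>Y\<in>Linf M.
      distr M borel X = distr M borel Y \<longrightarrow> \<rho> X = \<rho> Y)"

definition rho_mu :: "'w measure \<Rightarrow> (('w \<Rightarrow> real) \<Rightarrow> real) \<Rightarrow> 'a topology \<Rightarrow>
    'a measure \<Rightarrow> ('a \<Rightarrow> real) \<Rightarrow> real" where
  "rho_mu M \<rho> T \<mu> f =
     \<rho> (f \<circ> (SOME X. X \<in> M \<rightarrow>\<^sub>M borel_of T \<and> distr M (borel_of T) X = \<mu>))"

definition divergence :: "'w measure \<Rightarrow> (('w \<Rightarrow> real) \<Rightarrow> real) \<Rightarrow> 'a topology \<Rightarrow>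
    'a measure \<Rightarrow> 'a measure \<Rightarrow> ereal" where
  "divergence M \<rho> T \<nu> \<mu> =
     (SUP f\<in>bounded_borel_funs T. ereal (integral\<^sup>L \<nu> f - rho_mu M \<rho> T \<mu> f))"

definition compact_supp_prob :: "real measure set" where
  "compact_supp_prob = {m. prob_space m \<and> sets m = sets (borel :: real measure) \<and>
      (\<exists>K. compact K \<and> emeasure m (UNIV - K) = 0)}"

definition rho_tilde :: "'w measure \<Rightarrow> (('w \<Rightarrow> real) \<Rightarrow> real) \<Rightarrow> real measure \<Rightarrow> real" where
  "rho_tilde M \<rho> m = \<rho> (SOME X. X \<in> Linf M \<and> distr M borel X = m)"

end

theory Submission
  imports Defs
begin

text \<open>
  The divergence \<open>\<alpha>(\<nu>|\<mu>)\<close> is a supremum over \<open>f\<close> of \<open>\<integral>f d\<nu> - \<rho>\<^sub>\<mu>(f)\<close>, which is affine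
  in \<open>\<nu>\<close>; hence concavity of \<open>\<mu> \<mapsto> \<rho>\<^sub>\<mu>(f)\<close> makes \<open>\<alpha>\<close> jointly convex. Since
  \<open>\<rho>\<^sub>\<mu>(f) = \<rho>~(f\<^sub>*\<mu>)\<close>, push-forwards commute with mixtures and every compactly supported law
  on the line is a push-forward, concavity of \<open>\<rho>\<^sub>\<mu>(f)\<close> and of \<open>\<rho>~\<close> are equivalent.

  Conversely, for a law \<open>\<mu>\<close> with finite support \<open>S\<close>, a subgradient of \<open>\<rho>\<close> at \<open>f(X)\<close>, restricted
  to the functions of a random variable \<open>X\<close> with law \<open>\<mu>\<close>, is a probability vector \<open>\<nu>\<close> on \<open>S\<close>
  for which the supremum defining \<open>\<alpha>(\<nu>|\<mu>)\<close> is attained at \<open>f\<close>; joint convexity of \<open>\<alpha>\<close> then yields concavity of \<open>\<rho>~\<close> on finitely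
  supported laws, and rounding down to the grid \<open>\<int>/(n+1)\<close>, which changes \<open>\<rho>\<close> by at most
  \<open>1/(n+1)\<close>, extends it to all compactly supported laws.

  Laws on a Polish space are realized by random variables on the nonatomic standard Borel space
  through a Borel embedding of Polish spaces into the real line and the quantile transform.
\<close>

lemma space_borel_of [simp]: "space (borel_of T) = topspace T"
  unfolding borel_of_def by (simp add: space_measure_of_conv openin_subset subset_eq)

lemma sets_borel_of: "sets (borel_of T) = sigma_sets (topspace T) {U. openin T U}"
  unfolding borel_of_def by (rule sets_measure_of) (auto dest: openin_subset)

lemma borel_of_openin: "openin T U \<Longrightarrow> U \<in> sets (borel_of T)"
  unfolding sets_borel_of by auto

lemma borel_of_euclidean [simp]: "borel_of euclidean = borel"
  unfolding borel_of_def borel_def by simp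

lemma Polish_space_euclidean_real: "Polish_space (euclidean :: real topology)"
proof -
  have "separable_space (euclidean :: real topology)"
    unfolding separable_space_def
    by (intro exI[of _ "\<rat>"]) (simp add: countable_rat Rats_closure_real)
  then show ?thesis
    by (simp add: Polish_space_def completely_metrizable_space_euclidean)
qed

lemma bounded_borel_funsD:
  assumes "f \<in> bounded_borel_funs T"
  shows "f \<in> borel_measurable (borel_of T)" and "\<exists>C. \<forall>x\<in>topspace T. \<bar>f x\<bar> \<le> C"
  using assms unfolding bounded_borel_funs_def bounded_iff by (auto simp: real_norm_def)

lemma bounded_borel_funs_euclideanI:
  "f \<in> borel_measurable borel \<Longrightarrow> (\<And>x. \<bar>f x\<bar> \<le> C) \<Longrightarrow> f \<in> bounded_borel_funs euclidean"
  unfolding bounded_borel_funs_def bounded_iff by (auto simp: real_norm_def)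

lemma prob_measuresD:
  assumes "\<mu> \<in> prob_measures T"
  shows "prob_space \<mu>" and "sets \<mu> = sets (borel_of T)" and "space \<mu> = topspace T"
  using assms sets_eq_imp_space_eq[of \<mu> "borel_of T"] unfolding prob_measures_def by auto

lemma compact_supp_probD:
  assumes "m \<in> compact_supp_prob"
  shows "m \<in> prob_measures euclidean" and "\<exists>N. \<forall>N'\<ge>N. emeasure m (UNIV - {-N'..N'}) = 0"
proof -
  from assms obtain K where K: "compact K" "emeasure m (UNIV - K) = 0" and sets_m: "sets m = sets borel"
    unfolding compact_supp_prob_def by blast
  then show "m \<in> prob_measures euclidean"
    using assms unfolding compact_supp_prob_def prob_measures_def by auto
  from compact_imp_bounded[OF K(1)] obtain N where N: "\<forall>x\<in>K. \<bar>x\<bar> \<le> N"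
    unfolding bounded_iff by (auto simp: real_norm_def)
  have "K \<in> sets m"
    using sets_m compact_imp_closed[OF K(1)] by (simp add: borel_closed)
  then have "emeasure m (UNIV - {-N'..N'}) \<le> emeasure m (UNIV - K)" if "N' \<ge> N" for N'
    using N sets_m that by (intro emeasure_mono) force+
  with K(2) show "\<exists>N. \<forall>N'\<ge>N. emeasure m (UNIV - {-N'..N'}) = 0"
    by (intro exI[of _ N]) auto
qed

lemma compact_supp_prob_common_bound:
  assumes "m1 \<in> compact_supp_prob" "m2 \<in> compact_supp_prob"
  obtains N where "0 \<le> N" "emeasure m1 (UNIV - {-N..N}) = 0" "emeasure m2 (UNIV - {-N..N}) = 0"
proof -
  obtain N1 N2 where "\<forall>N'\<ge>N1. emeasure m1 (UNIV - {-N'..N'}) = 0" "\<forall>N'\<ge>N2. emeasure m2 (UNIV - {-N'..N'}) = 0"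
    using compact_supp_probD(2)[OF assms(1)] compact_supp_probD(2)[OF assms(2)] by blast
  then show thesis
    using that[of "max 0 (max N1 N2)"] by simp
qed

section \<open>Mixtures of measures\<close>

lemma sets_mix_measure [simp, measurable_cong]: "sets (mix_measure t \<nu>1 \<nu>2) = sets \<nu>1"
  by (simp add: mix_measure_def)

lemma space_mix_measure [simp]: "space (mix_measure t \<nu>1 \<nu>2) = space \<nu>1"
  by (simp add: mix_measure_def)

context
  fixes t :: real and \<nu>1 \<nu>2 :: "'a measure"
  assumes t: "0 \<le> t" "t \<le> 1" and sets_eq: "sets \<nu>2 = sets \<nu>1"
begin

lemma emeasure_mix_measure:
  "emeasure (mix_measure t \<nu>1 \<nu>2) A = ennreal t * emeasure \<nu>1 A + ennreal (1 - t) * emeasure \<nu>2 A"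
  (is "_ = ?\<mu> A")
proof (cases "A \<in> sets \<nu>1")
  case True
  have "countably_additive (sets \<nu>1) ?\<mu>"
  proof (rule countably_additiveI)
    fix A :: "nat \<Rightarrow> _"  assume "range A \<subseteq> sets \<nu>1" "disjoint_family A"
    then show "(\<Sum>i. ?\<mu> (A i)) = ?\<mu> (\<Union>i. A i)"
      using sets_eq by (simp add: suminf_add[symmetric] suminf_emeasure)
  qed
  moreover have "positive (sets \<nu>1) ?\<mu>"
    by (simp add: positive_def sets_eq[symmetric])
  ultimately show ?thesis
    unfolding mix_measure_def using True
    by (intro emeasure_measure_of_sigma) (simp_all add: sets.sigma_algebra_axioms)
next
  case False
  then show ?thesis using sets_eq by (simp add: emeasure_notin_sets)
qed

lemma nn_integral_mix_measure:
  assumes "f \<in> borel_measurable \<nu>1"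
  shows "(\<integral>\<^sup>+x. f x \<partial>mix_measure t \<nu>1 \<nu>2) = ennreal t * (\<integral>\<^sup>+x. f x \<partial>\<nu>1) + ennreal (1 - t) * (\<integral>\<^sup>+x. f x \<partial>\<nu>2)"
  using assms
proof induction
  case (cong f g)
  with sets_eq_imp_space_eq[OF sets_eq] show ?case
    by (simp cong: nn_integral_cong_simp)
next
  case (set A)
  then show ?case using sets_eq by (simp add: emeasure_mix_measure)
next
  case (mult f c)
  then have "f \<in> borel_measurable \<nu>2" using measurable_cong_sets[OF sets_eq] by blast
  with mult show ?case
    by (simp add: nn_integral_cmult distrib_left mult.left_commute)
next
  case (add f g)
  then have "f \<in> borel_measurable \<nu>2" "g \<in> borel_measurable \<nu>2"
    using measurable_cong_sets[OF sets_eq] by blast+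
  with add show ?case
    by (simp add: nn_integral_add distrib_left algebra_simps)
next
  case (seq U)
  have SUP_eq: "(\<integral>\<^sup>+x. (\<Squnion> range U) x \<partial>N) = (SUP i. \<integral>\<^sup>+x. U i x \<partial>N)" if "sets N = sets \<nu>1" for N
  proof -
    have "U i \<in> borel_measurable N" for i
      using seq(1)[of i] measurable_cong_sets[OF that] by blast
    moreover have "\<Squnion> range U = (\<lambda>x. SUP i. U i x)"
      by (rule ext) (simp only: SUP_apply)
    ultimately show ?thesis
      using seq(3) by (simp add: nn_integral_monotone_convergence_SUP)
  qed
  have incseq: "incseq (\<lambda>i. c * (\<integral>\<^sup>+x. U i x \<partial>N))" for c N
    using seq(3) by (auto simp: incseq_def le_fun_def intro!: mult_left_mono nn_integral_mono)
  have "(\<integral>\<^sup>+x. (\<Squnion> range U) x \<partial>mix_measure t \<nu>1 \<nu>2) = (SUP i. \<integral>\<^sup>+x. U i x \<partial>mix_measure t \<nu>1 \<nu>2)"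
    by (rule SUP_eq) simp
  also have "\<dots> = (SUP i. ennreal t * (\<integral>\<^sup>+x. U i x \<partial>\<nu>1) + ennreal (1 - t) * (\<integral>\<^sup>+x. U i x \<partial>\<nu>2))"
    using seq by simp
  also have "\<dots> = ennreal t * (SUP i. \<integral>\<^sup>+x. U i x \<partial>\<nu>1) + ennreal (1 - t) * (SUP i. \<integral>\<^sup>+x. U i x \<partial>\<nu>2)"
    by (simp add: incseq ennreal_SUP_add SUP_mult_left_ennreal)
  finally show ?case
    using SUP_eq[OF refl] SUP_eq[OF sets_eq] by simp
qed

end

lemma prob_space_mix_measure:
  assumes t: "0 \<le> t" "t \<le> 1" and sets_eq: "sets \<nu>2 = sets \<nu>1"
    and "prob_space \<nu>1" "prob_space \<nu>2"
  shows "prob_space (mix_measure t \<nu>1 \<nu>2)"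
proof (rule prob_spaceI)
  have "emeasure \<nu>1 (space \<nu>1) = 1" "emeasure \<nu>2 (space \<nu>2) = 1"
    using assms by (simp_all add: prob_space.emeasure_space_1)
  then show "emeasure (mix_measure t \<nu>1 \<nu>2) (space (mix_measure t \<nu>1 \<nu>2)) = 1"
    using t sets_eq_imp_space_eq[OF sets_eq]
    by (simp add: emeasure_mix_measure[OF t sets_eq] space_mix_measure
        ennreal_plus[symmetric] del: ennreal_plus)
qed

lemma mix_measure_in_prob_measures:
  "\<mu>1 \<in> prob_measures T \<Longrightarrow> \<mu>2 \<in> prob_measures T \<Longrightarrow> t \<in> {0..1} \<Longrightarrow>
    mix_measure t \<mu>1 \<mu>2 \<in> prob_measures T"
  unfolding prob_measures_def by (auto intro!: prob_space_mix_measure)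

lemma mix_measure_in_compact_supp_prob:
  assumes "m1 \<in> compact_supp_prob" "m2 \<in> compact_supp_prob" "t \<in> {0..1}"
    and "emeasure m1 (UNIV - K) = 0" "emeasure m2 (UNIV - K) = 0" "compact K"
  shows "mix_measure t m1 m2 \<in> compact_supp_prob"
  using assms unfolding compact_supp_prob_def
  by (auto intro!: prob_space_mix_measure exI[of _ K] simp: emeasure_mix_measure)

lemma integral_mix_measure:
  fixes f :: "'a \<Rightarrow> real"
  assumes t: "0 \<le> t" "t \<le> 1" and sets_eq: "sets \<nu>2 = sets \<nu>1"
    and prob: "prob_space \<nu>1" "prob_space \<nu>2"
    and f: "f \<in> borel_measurable \<nu>1" and C: "\<And>x. x \<in> space \<nu>1 \<Longrightarrow> \<bar>f x\<bar> \<le> C"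
  shows "(\<integral>x. f x \<partial>mix_measure t \<nu>1 \<nu>2) = t * (\<integral>x. f x \<partial>\<nu>1) + (1 - t) * (\<integral>x. f x \<partial>\<nu>2)"
proof -
  let ?m = "mix_measure t \<nu>1 \<nu>2" and ?g = "\<lambda>x. f x + C"
  \<comment> \<open>Shifted by \<open>C\<close>, the integrand is nonnegative, so \<open>nn_integral_mix_measure\<close> applies.\<close>
  have facts: "0 \<le> (\<integral>x. ?g x \<partial>N)" "(\<integral>x. ?g x \<partial>N) = (\<integral>x. f x \<partial>N) + C"
      "(\<integral>\<^sup>+x. ?g x \<partial>N) = ennreal (\<integral>x. ?g x \<partial>N)"
    if "prob_space N" "sets N = sets \<nu>1" for N
  proof -
    interpret N: prob_space N by fact
    have f_N: "f \<in> borel_measurable N" using f measurable_cong_sets[OF that(2)] by blast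
    have bound: "x \<in> space N \<Longrightarrow> \<bar>f x\<bar> \<le> C" for x
      using C sets_eq_imp_space_eq[OF that(2)] by blast
    then have "integrable N f"
      using f_N by (intro N.integrable_const_bound[of _ C]) (auto intro!: AE_I2)
    moreover have nonneg: "AE x in N. 0 \<le> ?g x"
      by (auto intro!: AE_I2 dest!: bound simp: abs_le_iff)
    ultimately show "(\<integral>\<^sup>+x. ?g x \<partial>N) = ennreal (\<integral>x. ?g x \<partial>N)"
      by (simp add: nn_integral_eq_integral)
    from nonneg show "0 \<le> (\<integral>x. ?g x \<partial>N)"
      by (rule integral_nonneg_AE)
    from \<open>integrable N f\<close> show "(\<integral>x. ?g x \<partial>N) = (\<integral>x. f x \<partial>N) + C"
      by (simp add: N.prob_space)
  qed
  note m = facts[OF prob_space_mix_measure[OF t sets_eq prob] sets_mix_measure]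
  note \<nu>1 = facts[OF prob(1) refl] and \<nu>2 = facts[OF prob(2) sets_eq]
  have "ennreal (\<integral>x. ?g x \<partial>?m) = ennreal t * (\<integral>\<^sup>+x. ?g x \<partial>\<nu>1) + ennreal (1 - t) * (\<integral>\<^sup>+x. ?g x \<partial>\<nu>2)"
    using f by (simp add: m(3)[symmetric] nn_integral_mix_measure[OF t sets_eq])
  also have "\<dots> = ennreal (t * (\<integral>x. ?g x \<partial>\<nu>1) + (1 - t) * (\<integral>x. ?g x \<partial>\<nu>2))"
    using t \<nu>1(1) \<nu>2(1) by (simp add: \<nu>1(3) \<nu>2(3) ennreal_mult ennreal_plus)
  finally have "(\<integral>x. ?g x \<partial>?m) = t * (\<integral>x. ?g x \<partial>\<nu>1) + (1 - t) * (\<integral>x. ?g x \<partial>\<nu>2)"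
    using t m(1) \<nu>1(1) \<nu>2(1) by (subst (asm) ennreal_inj) auto
  then show ?thesis
    unfolding m(2) \<nu>1(2) \<nu>2(2) by (simp add: algebra_simps)
qed

lemma distr_mix_measure:
  assumes t: "0 \<le> t" "t \<le> 1" and sets_eq: "sets \<nu>2 = sets \<nu>1" and f: "f \<in> \<nu>1 \<rightarrow>\<^sub>M N"
  shows "distr (mix_measure t \<nu>1 \<nu>2) N f = mix_measure t (distr \<nu>1 N f) (distr \<nu>2 N f)"
proof (rule measure_eqI)
  have "f \<in> \<nu>2 \<rightarrow>\<^sub>M N" "f \<in> mix_measure t \<nu>1 \<nu>2 \<rightarrow>\<^sub>M N"
    using f measurable_cong_sets[OF sets_eq] measurable_cong_sets[OF sets_mix_measure[of t \<nu>1 \<nu>2]]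
    by blast+
  moreover have "space \<nu>2 = space \<nu>1" by (rule sets_eq_imp_space_eq[OF sets_eq])
  ultimately show "emeasure (distr (mix_measure t \<nu>1 \<nu>2) N f) A
      = emeasure (mix_measure t (distr \<nu>1 N f) (distr \<nu>2 N f)) A"
    if "A \<in> sets (distr (mix_measure t \<nu>1 \<nu>2) N f)" for A
    using that f t sets_eq by (simp add: emeasure_distr emeasure_mix_measure)
qed (simp add: t)


section \<open>A Borel embedding of a Polish space into the real line\<close>

text \<open>Digits 0 and 1 in base 4 keep every tail below 1/3, so, unlike binary expansions,
  the digits can be read off with the floor function.\<close>

definition quaternary_code :: "(nat \<Rightarrow> bool) \<Rightarrow> real" where
  "quaternary_code b = (\<Sum>j. of_bool (b j) * (1/4) ^ Suc j)"

definition quaternary_digit :: "real \<Rightarrow> nat \<Rightarrow> bool" where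
  "quaternary_digit r j \<longleftrightarrow> \<lfloor>4 ^ Suc j * r\<rfloor> mod 4 = 1"

lemma sums_quarter_powers: "(\<lambda>j. (1/4::real) ^ Suc j) sums (1/3)"
  using sums_mult[OF geometric_sums[of "1/4::real"], of "1/4"] by simp

lemma summable_quaternary_code: "summable (\<lambda>j. of_bool (b j) * (1/4::real) ^ Suc j)"
  by (rule summable_comparison_test[OF _ sums_summable[OF sums_quarter_powers]]) auto

lemma quaternary_code_bounds: "0 \<le> quaternary_code b" "quaternary_code b < 1"
proof -
  show "0 \<le> quaternary_code b"
    unfolding quaternary_code_def by (intro suminf_nonneg summable_quaternary_code) auto
  have "quaternary_code b \<le> (\<Sum>j. (1/4::real) ^ Suc j)"
    unfolding quaternary_code_def
    by (intro suminf_le summable_quaternary_code sums_summable[OF sums_quarter_powers]) auto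
  then show "quaternary_code b < 1"
    using sums_unique[OF sums_quarter_powers] by simp
qed

lemma quaternary_code_shift:
  "4 ^ Suc n * quaternary_code b
     = of_int (\<Sum>j<Suc n. of_bool (b j) * 4 ^ (n - j)) + quaternary_code (\<lambda>m. b (m + Suc n))"
proof -
  let ?f = "\<lambda>j. of_bool (b j) * (1/4::real) ^ Suc j"
  have "quaternary_code b = (\<Sum>m. ?f (m + Suc n)) + (\<Sum>j<Suc n. ?f j)"
    unfolding quaternary_code_def by (rule suminf_split_initial_segment[OF summable_quaternary_code])
  moreover have "4 ^ Suc n * (\<Sum>j<Suc n. ?f j) = of_int (\<Sum>j<Suc n. of_bool (b j) * 4 ^ (n - j))"
  proof -
    have "4 ^ Suc n * ?f j = of_bool (b j) * 4 ^ (n - j)" if "j < Suc n" for j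
    proof -
      have "(4::real) ^ Suc n = 4 ^ (n - j) * 4 ^ Suc j" using that by (simp flip: power_add)
      then show ?thesis by (simp add: power_one_over field_simps)
    qed
    then have "(\<Sum>j<Suc n. 4 ^ Suc n * ?f j) = (\<Sum>j<Suc n. of_int (of_bool (b j) * 4 ^ (n - j)))"
      by (intro sum.cong) simp_all
    then show ?thesis by (simp only: sum_distrib_left of_int_sum)
  qed
  moreover have "4 ^ Suc n * (\<Sum>m. ?f (m + Suc n)) = quaternary_code (\<lambda>m. b (m + Suc n))"
  proof -
    have scaled: "4 ^ Suc n * ?f (m + Suc n) = of_bool (b (m + Suc n)) * (1/4) ^ Suc m" for m
    proof -
      have "(1/4::real) ^ Suc (m + Suc n) = (1/4) ^ Suc m * (1/4) ^ Suc n" by (simp flip: power_add)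
      then show ?thesis by (simp add: power_one_over field_simps)
    qed
    have "quaternary_code (\<lambda>m. b (m + Suc n)) = (\<Sum>m. 4 ^ Suc n * ?f (m + Suc n))"
      unfolding quaternary_code_def scaled ..
    also have "\<dots> = 4 ^ Suc n * (\<Sum>m. ?f (m + Suc n))"
      by (rule suminf_mult[OF summable_ignore_initial_segment[OF summable_quaternary_code]])
    finally show ?thesis ..
  qed
  ultimately show ?thesis by (simp add: distrib_left)
qed

lemma quaternary_digit_code [simp]: "quaternary_digit (quaternary_code b) n \<longleftrightarrow> b n"
proof -
  define A :: int where "A = (\<Sum>j<Suc n. of_bool (b j) * 4 ^ (n - j))"
  have "4 ^ Suc n * quaternary_code b = of_int A + quaternary_code (\<lambda>m. b (m + Suc n))"
    unfolding A_def by (rule quaternary_code_shift)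
  then have "\<lfloor>4 ^ Suc n * quaternary_code b\<rfloor> = A"
    using quaternary_code_bounds[of "\<lambda>m. b (m + Suc n)"] by (intro floor_unique) simp_all
  moreover have "A = 4 * (\<Sum>j<n. of_bool (b j) * 4 ^ (n - Suc j)) + of_bool (b n)"
  proof -
    have "(\<Sum>j<n. of_bool (b j) * (4::int) ^ (n - j)) = 4 * (\<Sum>j<n. of_bool (b j) * 4 ^ (n - Suc j))"
      unfolding sum_distrib_left
      by (intro sum.cong refl) (auto simp: Suc_diff_Suc power_Suc[symmetric] simp del: power_Suc)
    then show ?thesis unfolding A_def by simp
  qed
  ultimately show ?thesis
    unfolding quaternary_digit_def by simp
qed

context Metric_space
begin

lemma MCauchy_iff_inverse_Suc:
  "MCauchy \<sigma> \<longleftrightarrow> range \<sigma> \<subseteq> M \<and>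
    (\<forall>m. \<exists>N. \<forall>n\<ge>N. \<forall>n'\<ge>N. d (\<sigma> n) (\<sigma> n') < inverse (real (Suc m)))"
  unfolding MCauchy_def
proof (intro conj_cong refl iffI allI impI)
  fix m assume "\<forall>\<epsilon>>0. \<exists>N. \<forall>n n'. N \<le> n \<longrightarrow> N \<le> n' \<longrightarrow> d (\<sigma> n) (\<sigma> n') < \<epsilon>"
  then show "\<exists>N. \<forall>n\<ge>N. \<forall>n'\<ge>N. d (\<sigma> n) (\<sigma> n') < inverse (real (Suc m))"
    by simp
next
  fix \<epsilon> :: real
  assume H: "\<forall>m. \<exists>N. \<forall>n\<ge>N. \<forall>n'\<ge>N. d (\<sigma> n) (\<sigma> n') < inverse (real (Suc m))"
    and "\<epsilon> > 0"
  then obtain m where m: "inverse (real (Suc m)) < \<epsilon>" using reals_Archimedean by blast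
  from H obtain N where "\<forall>n\<ge>N. \<forall>n'\<ge>N. d (\<sigma> n) (\<sigma> n') < inverse (real (Suc m))"
    by blast
  with m show "\<exists>N. \<forall>n n'. N \<le> n \<longrightarrow> N \<le> n' \<longrightarrow> d (\<sigma> n) (\<sigma> n') < \<epsilon>"
    by force
qed

lemma limitin_in_openin_iff_balls:
  assumes lim: "limitin mtopology \<sigma> y sequentially" and U: "openin mtopology U"
  shows "y \<in> U \<longleftrightarrow> (\<exists>m K. \<forall>k\<ge>K. mball (\<sigma> k) (2 * inverse (real (Suc m))) \<subseteq> U)"
proof -
  have y: "y \<in> M" and close: "\<And>m. \<exists>K. \<forall>k\<ge>K. \<sigma> k \<in> M \<and> d (\<sigma> k) y < inverse (real (Suc m))"
    using lim unfolding limitin_metric eventually_sequentially by auto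
  show ?thesis
  proof
    assume "y \<in> U"
    then obtain \<epsilon> where \<epsilon>: "\<epsilon> > 0" "mball y \<epsilon> \<subseteq> U" using U unfolding openin_mtopology by blast
    then obtain m where m: "inverse (real (Suc m)) < \<epsilon> / 3" using reals_Archimedean[of "\<epsilon> / 3"] by auto
    obtain K where K: "\<And>k. k \<ge> K \<Longrightarrow> \<sigma> k \<in> M \<and> d (\<sigma> k) y < inverse (real (Suc m))"
      using close by blast
    have "mball (\<sigma> k) (2 * inverse (real (Suc m))) \<subseteq> mball y \<epsilon>" if "k \<ge> K" for k
    proof
      fix z assume z: "z \<in> mball (\<sigma> k) (2 * inverse (real (Suc m)))"
      have "d y z \<le> d y (\<sigma> k) + d (\<sigma> k) z"
        using y K[OF that] z by (intro triangle) auto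
      also have "\<dots> < \<epsilon>"
        using K[OF that] z m by (simp add: commute)
      finally show "z \<in> mball y \<epsilon>" using y z by simp
    qed
    then show "\<exists>m K. \<forall>k\<ge>K. mball (\<sigma> k) (2 * inverse (real (Suc m))) \<subseteq> U" using \<epsilon>(2) by blast
  next
    assume "\<exists>m K. \<forall>k\<ge>K. mball (\<sigma> k) (2 * inverse (real (Suc m))) \<subseteq> U"
    then obtain m K1 where K1: "\<And>k. k \<ge> K1 \<Longrightarrow> mball (\<sigma> k) (2 * inverse (real (Suc m))) \<subseteq> U" by blast
    obtain K2 where K2: "\<And>k. k \<ge> K2 \<Longrightarrow> \<sigma> k \<in> M \<and> d (\<sigma> k) y < inverse (real (Suc m))"
      using close by blast
    have "0 < inverse (real (Suc m))" by simp
    then have "d (\<sigma> (max K1 K2)) y < 2 * inverse (real (Suc m))"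
      using K2[of "max K1 K2"] by linarith
    then have "y \<in> mball (\<sigma> (max K1 K2)) (2 * inverse (real (Suc m)))"
      using K2[of "max K1 K2"] y by (simp add: commute)
    then show "y \<in> U" using K1[of "max K1 K2"] by auto
  qed
qed

lemma measurable_limit_or_default:
  fixes q :: "nat \<Rightarrow> 'a" and c :: "nat \<Rightarrow> 'b \<Rightarrow> nat"
  assumes complete: "mcomplete" and q: "range q \<subseteq> M" and x0: "x0 \<in> M"
    and c [measurable]: "\<And>k. c k \<in> N \<rightarrow>\<^sub>M count_space UNIV"
  shows "(\<lambda>r. if MCauchy (\<lambda>k. q (c k r))
      then SOME y. limitin mtopology (\<lambda>k. q (c k r)) y sequentially else x0) \<in> N \<rightarrow>\<^sub>M borel_of mtopology"
    (is "?\<psi> \<in> _")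
proof -
  have lim: "limitin mtopology (\<lambda>k. q (c k r)) (?\<psi> r) sequentially" if "MCauchy (\<lambda>k. q (c k r))" for r
    using that complete someI_ex[of "\<lambda>y. limitin mtopology (\<lambda>k. q (c k r)) y sequentially"]
    unfolding mcomplete_def by auto
  have \<psi>_M: "?\<psi> r \<in> M" for r
    using lim[of r] x0 limitin_mspace by (cases "MCauchy (\<lambda>k. q (c k r))") auto
  have preimage: "{r \<in> space N. ?\<psi> r \<in> U} \<in> sets N" if U: "openin mtopology U" for U
  proof -
    have "?\<psi> r \<in> U \<longleftrightarrow> (MCauchy (\<lambda>k. q (c k r)) \<and>
        (\<exists>m K. \<forall>k\<ge>K. mball (q (c k r)) (2 * inverse (real (Suc m))) \<subseteq> U))
      \<or> (\<not> MCauchy (\<lambda>k. q (c k r)) \<and> x0 \<in> U)" for r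
      using limitin_in_openin_iff_balls[OF lim U] by (cases "MCauchy (\<lambda>k. q (c k r))") auto
    then have "{r \<in> space N. ?\<psi> r \<in> U} =
        {r \<in> space N. ((\<forall>m. \<exists>K. \<forall>n\<ge>K. \<forall>n'\<ge>K. d (q (c n r)) (q (c n' r)) < inverse (real (Suc m)))
            \<and> (\<exists>m K. \<forall>k\<ge>K. mball (q (c k r)) (2 * inverse (real (Suc m))) \<subseteq> U))
          \<or> (\<not> (\<forall>m. \<exists>K. \<forall>n\<ge>K. \<forall>n'\<ge>K. d (q (c n r)) (q (c n' r)) < inverse (real (Suc m)))
            \<and> x0 \<in> U)}"
      using q by (simp add: MCauchy_iff_inverse_Suc image_subset_iff)
    also have "\<dots> \<in> sets N"
    proof -
      \<comment> \<open>Any predicate of the values of the \<open>c k\<close> is measurable, so \<open>d\<close> and \<open>q\<close> are abstracted away.\<close>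
      have "Measurable.pred N (\<lambda>r. \<forall>m. \<exists>K. \<forall>n\<ge>K. \<forall>n'\<ge>K. R m (c n r) (c n' r))"
        for R :: "nat \<Rightarrow> nat \<Rightarrow> nat \<Rightarrow> bool"
        by measurable
      note cauchy = this[of "\<lambda>m i j. d (q i) (q j) < inverse (real (Suc m))"]
      have "Measurable.pred N (\<lambda>r. \<exists>m K. \<forall>k\<ge>K. Q m (c k r))" for Q :: "nat \<Rightarrow> nat \<Rightarrow> bool"
        by measurable
      note balls = this[of "\<lambda>m i. mball (q i) (2 * inverse (real (Suc m))) \<subseteq> U"]
      show ?thesis
        unfolding pred_def[symmetric] by (intro pred_intros_logic cauchy balls measurable_const) simp
    qed
    finally show ?thesis .
  qed
  show ?thesis
    unfolding borel_of_def
  proof (rule measurable_measure_of)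
    show "{U. openin mtopology U} \<subseteq> Pow (topspace mtopology)"
      by (auto simp: openin_mtopology)
    show "?\<psi> \<in> space N \<rightarrow> topspace mtopology"
      using \<psi>_M by simp
    fix U assume "U \<in> {U. openin mtopology U}"
    moreover have "?\<psi> -` U \<inter> space N = {r \<in> space N. ?\<psi> r \<in> U}" by blast
    ultimately show "?\<psi> -` U \<inter> space N \<in> sets N" using preimage by simp
  qed
qed

end

lemma (in Metric_space) separable_dense_sequence:
  assumes "separable_space mtopology" and "M \<noteq> {}"
  obtains q :: "nat \<Rightarrow> 'a" where "range q \<subseteq> M" "\<And>x \<epsilon>. x \<in> M \<Longrightarrow> 0 < \<epsilon> \<Longrightarrow> \<exists>i. d (q i) x < \<epsilon>"
proof -
  from assms(1) obtain D where D: "countable D" "D \<subseteq> M" "mtopology closure_of D = M"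
    unfolding separable_space_def by auto
  with assms(2) have "D \<noteq> {}" by auto
  define q where "q = from_nat_into D"
  have "range q \<subseteq> M"
    using D(2) from_nat_into[OF \<open>D \<noteq> {}\<close>] unfolding q_def by blast
  moreover have "\<exists>i. d (q i) x < \<epsilon>" if x: "x \<in> M" and \<epsilon>: "\<epsilon> > 0" for x \<epsilon>
  proof -
    have "x \<in> mtopology closure_of D" using D(3) x by simp
    then obtain y where "y \<in> D" "y \<in> mball x \<epsilon>"
      using \<epsilon> unfolding metric_closure_of by blast
    moreover obtain i where "q i = y"
      using \<open>y \<in> D\<close> from_nat_into_surj[OF D(1)] unfolding q_def by blast
    ultimately show ?thesis by (auto simp: commute)
  qed
  ultimately show thesis using that by blast
qed

lemma (in Metric_space) limitin_if_dist_less_inverse_Suc: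
  assumes "range \<sigma> \<subseteq> M" and "x \<in> M" and close: "\<And>k. d (\<sigma> k) x < inverse (real (Suc k))"
  shows "limitin mtopology \<sigma> x sequentially"
  unfolding limitin_metric eventually_sequentially
proof (intro conjI allI impI \<open>x \<in> M\<close>)
  fix \<epsilon> :: real assume "\<epsilon> > 0"
  then obtain K where K: "inverse (real (Suc K)) < \<epsilon>" using reals_Archimedean by blast
  have "\<sigma> k \<in> M \<and> d (\<sigma> k) x < \<epsilon>" if "K \<le> k" for k
  proof
    show "\<sigma> k \<in> M" using assms(1) by auto
    have "d (\<sigma> k) x < inverse (real (Suc k))" by (rule close)
    also have "\<dots> \<le> inverse (real (Suc K))" using \<open>K \<le> k\<close> by (simp add: le_imp_inverse_le)
    finally show "d (\<sigma> k) x < \<epsilon>" using K by simp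
  qed
  then show "\<exists>K. \<forall>k\<ge>K. \<sigma> k \<in> M \<and> d (\<sigma> k) x < \<epsilon>" by blast
qed

text \<open>A point is encoded by the sequence of truth values of its memberships in the balls with
  centres in a dense sequence and radii \<open>1 / (k + 1)\<close>; it is decoded as the limit of the
  centres of the first such balls containing it.\<close>

theorem Polish_space_borel_embedding:
  fixes T :: "'a topology"
  assumes "Polish_space T" and "topspace T \<noteq> {}"
  obtains \<phi> :: "'a \<Rightarrow> real" and \<psi> where "\<phi> \<in> borel_of T \<rightarrow>\<^sub>M borel" "\<psi> \<in> borel \<rightarrow>\<^sub>M borel_of T"
    "\<And>x. x \<in> topspace T \<Longrightarrow> \<psi> (\<phi> x) = x"
proof -
  from assms(1) obtain E d where "Metric_space E d" and complete: "Metric_space.mcomplete E d"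
      and T: "T = Metric_space.mtopology E d"
    unfolding Polish_space_def completely_metrizable_space_def by blast
  interpret Metric_space E d by fact
  have "separable_space mtopology" "E \<noteq> {}"
    using assms T unfolding Polish_space_def by auto
  from separable_dense_sequence[OF this]
  obtain q :: "nat \<Rightarrow> 'a" where q: "range q \<subseteq> E" and dense: "\<And>x \<epsilon>. x \<in> E \<Longrightarrow> 0 < \<epsilon> \<Longrightarrow> \<exists>i. d (q i) x < \<epsilon>"
    by blast
  define r :: "nat \<Rightarrow> real" where "r k = inverse (real (Suc k))" for k
  define B where "B j = mball (q (fst (prod_decode j))) (r (snd (prod_decode j)))" for j
  define \<phi> where "\<phi> x = quaternary_code (\<lambda>j. x \<in> B j)" for x
  define c where "c k s = (LEAST i. quaternary_digit s (prod_encode (i, k)))" for k s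
  obtain x0 where x0: "x0 \<in> E" using assms(2) T by auto
  define \<psi> where "\<psi> s = (if MCauchy (\<lambda>k. q (c k s))
    then SOME y. limitin mtopology (\<lambda>k. q (c k s)) y sequentially else x0)" for s
  have "\<phi> \<in> borel_of T \<rightarrow>\<^sub>M borel"
  proof -
    have "B j \<in> sets (borel_of T)" for j
      unfolding T B_def by (rule borel_of_openin) (rule openin_mball)
    then have "(\<lambda>x. indicator (B j) x * (1/4::real) ^ Suc j) \<in> borel_measurable (borel_of T)" for j
      by simp
    then show ?thesis
      unfolding \<phi>_def quaternary_code_def by (simp add: indicator_def borel_measurable_suminf)
  qed
  moreover have "\<psi> \<in> borel \<rightarrow>\<^sub>M borel_of T"
  proof -
    have "Measurable.pred borel (\<lambda>s. quaternary_digit s j)" for j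
      unfolding quaternary_digit_def by measurable
    then have "c k \<in> borel \<rightarrow>\<^sub>M count_space UNIV" for k
      unfolding c_def by (rule measurable_Least)
    then show ?thesis
      unfolding \<psi>_def T by (rule measurable_limit_or_default[OF complete q x0])
  qed
  moreover have "\<psi> (\<phi> x) = x" if x: "x \<in> E" for x
  proof -
    have "d (q (c k (\<phi> x))) x < r k" for k
    proof -
      have digit: "quaternary_digit (\<phi> x) (prod_encode (i, k)) \<longleftrightarrow> d (q i) x < r k" for i
        using x q by (auto simp: \<phi>_def B_def)
      have "\<exists>i. quaternary_digit (\<phi> x) (prod_encode (i, k))"
        unfolding digit using dense[OF x] by (simp add: r_def)
      then show ?thesis
        unfolding c_def digit[symmetric] by (rule LeastI_ex)
    qed
    then have lim: "limitin mtopology (\<lambda>k. q (c k (\<phi> x))) x sequentially"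
      using q x unfolding r_def by (intro limitin_if_dist_less_inverse_Suc) auto
    then have "MCauchy (\<lambda>k. q (c k (\<phi> x)))"
      using q by (intro convergent_imp_MCauchy) auto
    moreover have "(SOME y. limitin mtopology (\<lambda>k. q (c k (\<phi> x))) y sequentially) = x"
      using someI[of "\<lambda>y. limitin mtopology (\<lambda>k. q (c k (\<phi> x))) y sequentially", OF lim] lim
      by (rule limitin_metric_unique) simp
    ultimately show ?thesis unfolding \<psi>_def by simp
  qed
  ultimately show thesis using that T by auto
qed


section \<open>Random variables with prescribed laws on a nonatomic standard Borel space\<close>

lemma (in real_distribution) continuous_cdf_sublevel:
  assumes cont: "\<And>x. isCont (cdf M) x" and u: "0 < u" "u < 1"
  obtains x where "\<And>y. cdf M y \<le> u \<longleftrightarrow> y \<le> x" and "cdf M x = u"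
proof -
  define S where "S = {y. cdf M y \<le> u}"
  have "\<forall>\<^sub>F y in at_bot. cdf M y < u" using cdf_lim_at_bot u(1) by (rule order_tendstoD(2))
  then obtain y0 where "cdf M y0 < u" using eventually_happens'[OF trivial_limit_at_bot_linorder] by blast
  then have "y0 \<in> S" unfolding S_def by simp
  then have S_ne: "S \<noteq> {}" by blast
  have "\<forall>\<^sub>F y in at_top. u < cdf M y" using cdf_lim_at_top_prob u(2) by (rule order_tendstoD(1))
  then obtain N where N: "\<And>y. y \<ge> N \<Longrightarrow> u < cdf M y" unfolding eventually_at_top_linorder by blast
  have S_bdd: "bdd_above S"
  proof (rule bdd_aboveI[of _ N])
    fix y assume "y \<in> S" then show "y \<le> N" using N[of y] unfolding S_def by force
  qed
  define x where "x = Sup S"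
  have upper: "y \<le> x" if "y \<in> S" for y unfolding x_def using that S_bdd by (rule cSup_upper)
  have below: "cdf M y \<le> u" if "y < x" for y
  proof -
    from that obtain s where "s \<in> S" "y < s" unfolding x_def using less_cSup_iff[OF S_ne S_bdd] by blast
    then show ?thesis unfolding S_def using cdf_nondecreasing[of y s] by auto
  qed
  have above: "u < cdf M y" if "x < y" for y
    using upper[of y] that unfolding S_def by force
  have "cdf M x \<le> u"
  proof (rule tendsto_upperbound)
    show "(cdf M \<longlongrightarrow> cdf M x) (at_left x)" using cont[of x] by (simp add: isCont_def filterlim_at_split)
    show "\<forall>\<^sub>F y in at_left x. cdf M y \<le> u" by (rule eventually_at_leftI[of "x - 1"]) (auto intro: below)
  qed simp
  moreover have "u \<le> cdf M x"
  proof (rule tendsto_lowerbound)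
    show "(cdf M \<longlongrightarrow> cdf M x) (at_right x)" using cont[of x] by (simp add: isCont_def filterlim_at_split)
    show "\<forall>\<^sub>F y in at_right x. u \<le> cdf M y"
      by (rule eventually_at_rightI[of _ "x + 1"]) (auto intro: above less_imp_le)
  qed simp
  moreover have "cdf M y \<le> u \<longleftrightarrow> y \<le> x" for y
    using upper[of y] cdf_nondecreasing[of y x] \<open>cdf M x \<le> u\<close> unfolding S_def by force
  ultimately show ?thesis using that by (meson order_antisym)
qed

lemma (in prob_space) probability_integral_transform:
  fixes V :: "'a \<Rightarrow> real"
  assumes V: "V \<in> borel_measurable M" and atomless: "\<And>v. prob (V -` {v} \<inter> space M) = 0"
    and u: "0 < u" "u < 1"
  shows "prob {\<omega>\<in>space M. cdf (distr M borel V) (V \<omega>) \<le> u} = u"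
proof -
  interpret K: real_distribution "distr M borel V"
    using V by simp
  have "isCont (cdf (distr M borel V)) x" for x
    unfolding K.isCont_cdf using V atomless[of x] by (subst measure_distr) auto
  then obtain x where x: "\<And>y. cdf (distr M borel V) y \<le> u \<longleftrightarrow> y \<le> x" "cdf (distr M borel V) x = u"
    using K.continuous_cdf_sublevel u by blast
  then have "{\<omega>\<in>space M. cdf (distr M borel V) (V \<omega>) \<le> u} = V -` {..x} \<inter> space M"
    by auto
  then show ?thesis
    using x(2) V by (simp add: cdf_def measure_distr)
qed

lemma (in prob_space) exists_uniform_random_variable:
  fixes V :: "'a \<Rightarrow> real"
  assumes V: "V \<in> borel_measurable M" and atomless: "\<And>v. prob (V -` {v} \<inter> space M) = 0"
  obtains U where "U \<in> borel_measurable M" "\<And>\<omega>. \<omega> \<in> space M \<Longrightarrow> 0 < U \<omega> \<and> U \<omega> < 1"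
    "\<And>v. 0 \<le> v \<Longrightarrow> v \<le> 1 \<Longrightarrow> prob {\<omega>\<in>space M. U \<omega> \<le> v} = v"
proof -
  define U0 where "U0 \<omega> = cdf (distr M borel V) (V \<omega>)" for \<omega>
  interpret K: real_distribution "distr M borel V"
    using V by simp
  have U0 [measurable]: "U0 \<in> borel_measurable M"
    unfolding U0_def using V by (intro measurable_compose[OF V] borel_measurable_mono) (auto simp: mono_def K.cdf_nondecreasing)
  have level: "0 < u \<Longrightarrow> u < 1 \<Longrightarrow> prob {\<omega>\<in>space M. U0 \<omega> \<le> u} = u" for u
    unfolding U0_def by (rule probability_integral_transform[OF V atomless])
  \<comment> \<open>The values 0 and 1 are attained with probability zero; redefine \<open>U0\<close> there.\<close>
  define B where "B = {\<omega>\<in>space M. U0 \<omega> \<le> 0} \<union> {\<omega>\<in>space M. 1 \<le> U0 \<omega>}"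
  have "prob B \<le> e" if "0 < e" for e
  proof -
    define u where "u = min e (1/2)"
    have u: "0 < u" "u < 1" "u \<le> e" using that by (auto simp: u_def)
    have "prob B \<le> prob {\<omega>\<in>space M. U0 \<omega> \<le> u/2} + prob (space M - {\<omega>\<in>space M. U0 \<omega> \<le> 1 - u/2})"
      unfolding B_def using u
      by (intro order_trans[OF measure_Un_le] add_mono finite_measure_mono) auto
    also have "\<dots> = u"
    proof -
      have "{\<omega>\<in>space M. U0 \<omega> \<le> 1 - u/2} \<in> sets M" by measurable
      then show ?thesis
        using u level[of "u/2"] level[of "1 - u/2"] by (simp add: prob_compl)
    qed
    finally show ?thesis using u by simp
  qed
  then have "prob B = 0"
    using field_le_epsilon[of "prob B" 0] measure_nonneg[of M B] by simp
  moreover have "B \<in> sets M"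
    unfolding B_def by measurable
  ultimately have "B \<in> null_sets M"
    by (simp add: null_sets_def emeasure_eq_measure)
  define U where "U \<omega> = (if 0 < U0 \<omega> \<and> U0 \<omega> < 1 then U0 \<omega> else 1/2)" for \<omega>
  have U: "U \<in> borel_measurable M" unfolding U_def by measurable
  moreover have U01: "0 < U \<omega> \<and> U \<omega> < 1" for \<omega> unfolding U_def by auto
  moreover have "prob {\<omega>\<in>space M. U \<omega> \<le> v} = v" if v: "0 \<le> v" "v \<le> 1" for v
  proof -
    consider "v = 0" | "v = 1" | "0 < v \<and> v < 1" using v by linarith
    then show ?thesis
    proof cases
      case 1 then show ?thesis using U01 by (simp add: not_le[symmetric])
    next
      case 2 then show ?thesis using U01 by (simp add: less_imp_le prob_space)
    next
      case 3
      have "prob {\<omega>\<in>space M. U \<omega> \<le> v} = prob {\<omega>\<in>space M. U0 \<omega> \<le> v}"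
        using \<open>B \<in> null_sets M\<close> U by (intro measure_eq_AE AE_I'[of B]) (auto simp: B_def U_def)
      with 3 show ?thesis by (simp add: level)
    qed
  qed
  ultimately show ?thesis using that by blast
qed


lemma nonatomic_standard_borel_atomless_random_variable:
  assumes "prob_space M" and nonatomic: "nonatomic M" and "standard_borel M"
  obtains V :: "'a \<Rightarrow> real" where "V \<in> borel_measurable M" "\<And>v. measure M (V -` {v} \<inter> space M) = 0"
proof -
  interpret prob_space M by fact
  from \<open>standard_borel M\<close> obtain T where T: "Polish_space T" "topspace T = space M" "sets M = sets (borel_of T)"
    unfolding standard_borel_def by blast
  have "topspace T \<noteq> {}" using T(2) not_empty by simp
  then obtain V :: "'a \<Rightarrow> real" and \<psi> where V: "V \<in> borel_of T \<rightarrow>\<^sub>M borel"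
      and inv: "\<And>x. x \<in> topspace T \<Longrightarrow> \<psi> (V x) = x"
    using Polish_space_borel_embedding[OF T(1)] by blast
  from V have V_M: "V \<in> borel_measurable M"
    using measurable_cong_sets[OF T(3) refl] by blast
  have "prob (V -` {v} \<inter> space M) = 0" for v
  proof (rule ccontr)
    let ?A = "V -` {v} \<inter> space M"
    have fibre: "a = b" if "a \<in> ?A" "b \<in> ?A" for a b
    proof -
      have "a \<in> topspace T" "b \<in> topspace T" using that T(2) by auto
      then have "\<psi> (V a) = a" "\<psi> (V b) = b" by (simp_all add: inv)
      with that show ?thesis by auto
    qed
    assume "prob ?A \<noteq> 0"
    then have "0 < prob ?A" using measure_nonneg[of M ?A] by linarith
    moreover have "?A \<in> sets M" using V_M by measurable
    ultimately obtain B where B: "B \<in> sets M" "B \<subseteq> ?A" "0 < prob B" "prob B < prob ?A"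
      using nonatomic unfolding nonatomic_def by blast
    then have "B \<noteq> {}" by auto
    then obtain b where "b \<in> B" by blast
    with B(2) fibre have "B = ?A" by blast
    with B(4) show False by simp
  qed
  with V_M that show thesis by blast
qed

lemma (in prob_space) distr_quantile_transform:
  fixes U :: "'a \<Rightarrow> real"
  assumes "real_distribution N" and U: "U \<in> borel_measurable M" "\<And>\<omega>. \<omega> \<in> space M \<Longrightarrow> 0 < U \<omega> \<and> U \<omega> < 1"
    and uniform: "\<And>v. 0 \<le> v \<Longrightarrow> v \<le> 1 \<Longrightarrow> prob {\<omega>\<in>space M. U \<omega> \<le> v} = v"
  shows "(\<lambda>\<omega>. Inf {x. U \<omega> \<le> cdf N x}) \<in> borel_measurable M"
    and "distr M borel (\<lambda>\<omega>. Inf {x. U \<omega> \<le> cdf N x}) = N"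
proof -
  interpret N: cdf_distribution N by (simp add: cdf_distribution_def assms(1))
  define Y where "Y \<omega> = Inf {x. U \<omega> \<le> cdf N x}" for \<omega>
  have "U \<in> M \<rightarrow>\<^sub>M restrict_space borel {0<..<1}"
    using U by (intro measurable_restrict_space2) auto
  from measurable_compose[OF this N.measurable_CI]
  show Y: "(\<lambda>\<omega>. Inf {x. U \<omega> \<le> cdf N x}) \<in> borel_measurable M" .
  have "cdf (distr M borel Y) x = cdf N x" for x
  proof -
    have "Y \<omega> \<le> x \<longleftrightarrow> U \<omega> \<le> cdf N x" if "\<omega> \<in> space M" for \<omega>
      using N.pseudoinverse[of "U \<omega>" x] U(2)[OF that] unfolding Y_def by simp
    then have "Y -` {..x} \<inter> space M = {\<omega>\<in>space M. U \<omega> \<le> cdf N x}"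
      by blast
    moreover have "cdf (distr M borel Y) x = prob (Y -` {..x} \<inter> space M)"
      unfolding cdf_def using Y[folded Y_def] by (simp add: measure_distr)
    ultimately show ?thesis
      using uniform N.cdf_nonneg[of x] N.cdf_bounded_prob[of x] by simp
  qed
  moreover have "real_distribution (distr M borel Y)"
    using Y[folded Y_def] by simp
  ultimately show "distr M borel (\<lambda>\<omega>. Inf {x. U \<omega> \<le> cdf N x}) = N"
    unfolding Y_def[symmetric] using assms(1) by (intro cdf_unique) auto
qed


lemma exists_random_variable_with_law:
  fixes M :: "'a measure" and T :: "'b topology"
  assumes "prob_space M" "nonatomic M" "standard_borel M"
    and T: "Polish_space T" and \<mu>: "\<mu> \<in> prob_measures T"
  obtains X where "X \<in> M \<rightarrow>\<^sub>M borel_of T" "distr M (borel_of T) X = \<mu>"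
proof -
  interpret prob_space M by fact
  note \<mu>_facts = prob_measuresD[OF \<mu>]
  have ne: "topspace T \<noteq> {}"
    using prob_space.not_empty[OF \<mu>_facts(1)] \<mu>_facts(3) by simp
  obtain \<phi> :: "'b \<Rightarrow> real" and \<psi> where \<phi>: "\<phi> \<in> borel_of T \<rightarrow>\<^sub>M borel"
      and \<psi>: "\<psi> \<in> borel \<rightarrow>\<^sub>M borel_of T" and inv: "\<And>x. x \<in> topspace T \<Longrightarrow> \<psi> (\<phi> x) = x"
    using Polish_space_borel_embedding[OF T ne] by blast
  obtain V :: "'a \<Rightarrow> real" where V: "V \<in> borel_measurable M" "\<And>v. prob (V -` {v} \<inter> space M) = 0"
    using nonatomic_standard_borel_atomless_random_variable[OF assms(1-3)] by blast
  obtain U where U: "U \<in> borel_measurable M" "\<And>\<omega>. \<omega> \<in> space M \<Longrightarrow> 0 < U \<omega> \<and> U \<omega> < 1"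
      "\<And>v. 0 \<le> v \<Longrightarrow> v \<le> 1 \<Longrightarrow> prob {\<omega>\<in>space M. U \<omega> \<le> v} = v"
    using exists_uniform_random_variable[OF V] by blast
  have \<phi>_\<mu>: "\<phi> \<in> \<mu> \<rightarrow>\<^sub>M borel"
    using \<phi> measurable_cong_sets[OF \<mu>_facts(2) refl] by blast
  \<comment> \<open>Realize the law of \<open>\<phi>\<close> on the real line, then map it back with \<open>\<psi>\<close>.\<close>
  define Y where "Y = (\<lambda>\<omega>. Inf {x. U \<omega> \<le> cdf (distr \<mu> borel \<phi>) x})"
  have "real_distribution (distr \<mu> borel \<phi>)"
    using prob_space.real_distribution_distr[OF \<mu>_facts(1) \<phi>_\<mu>] .
  from distr_quantile_transform[OF this U]
  have Y: "Y \<in> borel_measurable M" "distr M borel Y = distr \<mu> borel \<phi>"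
    unfolding Y_def by blast+
  have "distr M (borel_of T) (\<psi> \<circ> Y) = distr (distr M borel Y) (borel_of T) \<psi>"
    using distr_distr[OF \<psi> Y(1)] ..
  also have "\<dots> = distr \<mu> (borel_of T) (\<psi> \<circ> \<phi>)"
    unfolding Y(2) using distr_distr[OF \<psi> \<phi>_\<mu>] .
  also have "\<dots> = distr \<mu> (borel_of T) (\<lambda>x. x)"
    using inv \<mu>_facts(3) by (intro distr_cong) auto
  also have "\<dots> = \<mu>"
    by (rule distr_id2) (simp add: \<mu>_facts(2))
  finally show thesis
    by (rule that[OF measurable_comp[OF Y(1) \<psi>]])
qed


lemma Linf_bounded: "X \<in> borel_measurable M \<Longrightarrow> (\<And>\<omega>. \<omega> \<in> space M \<Longrightarrow> \<bar>X \<omega>\<bar> \<le> C) \<Longrightarrow> X \<in> Linf M"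
  unfolding Linf_def by (auto intro!: exI[of _ C] AE_I2)

lemma Linf_add_const: "X \<in> Linf M \<Longrightarrow> (\<lambda>\<omega>. X \<omega> + c) \<in> Linf M"
  unfolding Linf_def
proof (elim CollectE conjE exE, intro CollectI conjI)
  fix C assume "X \<in> borel_measurable M" "AE \<omega> in M. \<bar>X \<omega>\<bar> \<le> C"
  then show "(\<lambda>\<omega>. X \<omega> + c) \<in> borel_measurable M" "\<exists>C. AE \<omega> in M. \<bar>X \<omega> + c\<bar> \<le> C"
    by (auto intro!: exI[of _ "C + \<bar>c\<bar>"] elim!: eventually_mono)
qed

lemma Linf_comp_bounded_borel:
  assumes X: "X \<in> M \<rightarrow>\<^sub>M borel_of T" and f: "f \<in> bounded_borel_funs T"
  shows "(\<lambda>\<omega>. f (X \<omega>)) \<in> Linf M"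
proof -
  obtain C where C: "\<forall>x\<in>topspace T. \<bar>f x\<bar> \<le> C" using bounded_borel_funsD(2)[OF f] by blast
  show ?thesis
  proof (rule Linf_bounded)
    show "(\<lambda>\<omega>. f (X \<omega>)) \<in> borel_measurable M"
      using measurable_compose[OF X bounded_borel_funsD(1)[OF f]] .
    show "\<bar>f (X \<omega>)\<bar> \<le> C" if "\<omega> \<in> space M" for \<omega>
      using C measurable_space[OF X that] by simp
  qed
qed

definition clip :: "real \<Rightarrow> real \<Rightarrow> real" where
  "clip N x = max (- N) (min N x)"

lemma borel_measurable_clip [measurable]: "clip N \<in> borel_measurable borel"
  unfolding clip_def by measurable

lemma abs_clip_le: "0 \<le> N \<Longrightarrow> \<bar>clip N x\<bar> \<le> N"
  unfolding clip_def by auto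

lemma clip_eq_self: "\<bar>x\<bar> \<le> N \<Longrightarrow> clip N x = x"
  unfolding clip_def by auto

lemma clip_in_bounded_borel_funs: "0 \<le> N \<Longrightarrow> clip N \<in> bounded_borel_funs euclidean"
  by (rule bounded_borel_funs_euclideanI[OF borel_measurable_clip abs_clip_le])

lemma distr_clip:
  assumes sets_m: "sets m = sets borel" and null: "emeasure m (UNIV - {-N..N}) = 0"
  shows "distr m borel (clip N) = m"
proof -
  have "UNIV - {-N..N} \<in> null_sets m"
    using null sets_m by (simp add: null_sets_def)
  then have "AE x in m. clip N x = x"
    by (rule AE_I') (auto simp: clip_def)
  then have "distr m borel (clip N) = distr m borel (\<lambda>x. x)"
    using sets_m by (intro distr_cong_AE) simp_all
  also have "\<dots> = m"
    by (rule distr_id2) (simp add: sets_m)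
  finally show ?thesis .
qed

lemma distr_bounded_borel_in_compact_supp_prob:
  assumes "\<mu> \<in> prob_measures T" and f: "f \<in> bounded_borel_funs T"
  shows "distr \<mu> borel f \<in> compact_supp_prob"
proof -
  note \<mu> = prob_measuresD[OF assms(1)]
  obtain C where C: "\<forall>x\<in>topspace T. \<bar>f x\<bar> \<le> C" using bounded_borel_funsD(2)[OF f] by blast
  have f_\<mu>: "f \<in> borel_measurable \<mu>"
    using bounded_borel_funsD(1)[OF f] measurable_cong_sets[OF \<mu>(2) refl] by blast
  have "f -` (UNIV - {-C..C}) \<inter> space \<mu> = {}" using C \<mu>(3) by force
  then have "emeasure (distr \<mu> borel f) (UNIV - {-C..C}) = 0"
    using f_\<mu> by (subst emeasure_distr) auto
  then show ?thesis
    using prob_space.prob_space_distr[OF \<mu>(1) f_\<mu>] unfolding compact_supp_prob_def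
    by (auto intro!: exI[of _ "{-C..C}"])
qed

locale law_invariant_risk_measure = prob_space M for M :: "'a measure" +
  fixes \<rho> :: "('a \<Rightarrow> real) \<Rightarrow> real"
  assumes risk_measure: "risk_measure M \<rho>" and law_invariant: "law_invariant M \<rho>"
begin

lemma rho_convex:
  "X \<in> Linf M \<Longrightarrow> Y \<in> Linf M \<Longrightarrow> 0 \<le> t \<Longrightarrow> t \<le> 1 \<Longrightarrow>
    \<rho> (\<lambda>\<omega>. t * X \<omega> + (1 - t) * Y \<omega>) \<le> t * \<rho> X + (1 - t) * \<rho> Y"
proof -
  assume "X \<in> Linf M" "Y \<in> Linf M" "0 \<le> t" "t \<le> 1"
  moreover have "\<forall>X\<in>Linf M. \<forall>Y\<in>Linf M. \<forall>t\<in>{0..1::real}.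
      \<rho> (\<lambda>\<omega>. t * X \<omega> + (1 - t) * Y \<omega>) \<le> t * \<rho> X + (1 - t) * \<rho> Y"
    using risk_measure unfolding risk_measure_def by blast
  ultimately show ?thesis by simp
qed

lemma rho_mono: "X \<in> Linf M \<Longrightarrow> Y \<in> Linf M \<Longrightarrow> (AE \<omega> in M. X \<omega> \<le> Y \<omega>) \<Longrightarrow> \<rho> X \<le> \<rho> Y"
  using risk_measure unfolding risk_measure_def by blast

lemma rho_add_const: "X \<in> Linf M \<Longrightarrow> \<rho> (\<lambda>\<omega>. X \<omega> + c) = \<rho> X + c"
  using risk_measure unfolding risk_measure_def by blast

lemma rho_AE_cong: "X \<in> Linf M \<Longrightarrow> Y \<in> Linf M \<Longrightarrow> (AE \<omega> in M. X \<omega> = Y \<omega>) \<Longrightarrow> \<rho> X = \<rho> Y"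
proof -
  assume X: "X \<in> Linf M" and Y: "Y \<in> Linf M" and eq: "AE \<omega> in M. X \<omega> = Y \<omega>"
  have "AE \<omega> in M. X \<omega> \<le> Y \<omega>" "AE \<omega> in M. Y \<omega> \<le> X \<omega>"
    using eq by (auto elim!: eventually_mono)
  then show "\<rho> X = \<rho> Y"
    using rho_mono[OF X Y] rho_mono[OF Y X] by simp
qed

lemma rho_distr_cong: "X \<in> Linf M \<Longrightarrow> Y \<in> Linf M \<Longrightarrow> distr M borel X = distr M borel Y \<Longrightarrow> \<rho> X = \<rho> Y"
  using law_invariant unfolding law_invariant_def by blast

lemma rho_mu_eq_rho_comp:
  assumes X: "X \<in> M \<rightarrow>\<^sub>M borel_of T" and law: "distr M (borel_of T) X = \<mu>"
    and f: "f \<in> bounded_borel_funs T"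
  shows "rho_mu M \<rho> T \<mu> f = \<rho> (\<lambda>\<omega>. f (X \<omega>))"
proof -
  let ?X = "SOME X. X \<in> M \<rightarrow>\<^sub>M borel_of T \<and> distr M (borel_of T) X = \<mu>"
  have X': "?X \<in> M \<rightarrow>\<^sub>M borel_of T" "distr M (borel_of T) ?X = \<mu>"
    using someI[of "\<lambda>X. X \<in> M \<rightarrow>\<^sub>M borel_of T \<and> distr M (borel_of T) X = \<mu>", OF conjI[OF X law]] by auto
  have f_meas: "f \<in> borel_of T \<rightarrow>\<^sub>M borel" by (rule bounded_borel_funsD(1)[OF f])
  have "\<rho> (\<lambda>\<omega>. f (?X \<omega>)) = \<rho> (\<lambda>\<omega>. f (X \<omega>))"
  proof (rule rho_distr_cong)
    show "(\<lambda>\<omega>. f (?X \<omega>)) \<in> Linf M" "(\<lambda>\<omega>. f (X \<omega>)) \<in> Linf M"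
      using Linf_comp_bounded_borel X'(1) X f by blast+
    show "distr M borel (\<lambda>\<omega>. f (?X \<omega>)) = distr M borel (\<lambda>\<omega>. f (X \<omega>))"
      using distr_distr[OF f_meas X'(1)] distr_distr[OF f_meas X] X'(2) law by (simp add: comp_def)
  qed
  then show ?thesis unfolding rho_mu_def comp_def .
qed

lemma rho_tilde_eq_rho:
  assumes Y: "Y \<in> Linf M" and law: "distr M borel Y = m"
  shows "rho_tilde M \<rho> m = \<rho> Y"
proof -
  let ?Y = "SOME Y. Y \<in> Linf M \<and> distr M borel Y = m"
  have "?Y \<in> Linf M \<and> distr M borel ?Y = m"
    by (rule someI[of _ Y]) (use Y law in auto)
  then have "\<rho> ?Y = \<rho> Y"
    using Y law by (intro rho_distr_cong) simp_all
  then show ?thesis unfolding rho_tilde_def .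
qed

end

locale law_invariant_risk_measure_nonatomic = law_invariant_risk_measure +
  assumes nonatomic: "nonatomic M" and standard_borel: "standard_borel M"
begin

lemma rho_mu_eq_rho_tilde:
  assumes T: "Polish_space T" and \<mu>: "\<mu> \<in> prob_measures T" and f: "f \<in> bounded_borel_funs T"
  shows "rho_mu M \<rho> T \<mu> f = rho_tilde M \<rho> (distr \<mu> borel f)"
proof -
  obtain X where X: "X \<in> M \<rightarrow>\<^sub>M borel_of T" and law: "distr M (borel_of T) X = \<mu>"
    using exists_random_variable_with_law[OF prob_space_axioms nonatomic standard_borel T \<mu>] by blast
  have "distr M borel (\<lambda>\<omega>. f (X \<omega>)) = distr \<mu> borel f"
    using distr_distr[OF bounded_borel_funsD(1)[OF f] X] law by (simp add: comp_def)
  then show ?thesis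
    using rho_mu_eq_rho_comp[OF X law f] rho_tilde_eq_rho[OF Linf_comp_bounded_borel[OF X f]] by simp
qed

end


section \<open>Joint convexity of the divergence and concavity of the risk functionals\<close>

definition divergence_jointly_convex :: "'w measure \<Rightarrow> (('w \<Rightarrow> real) \<Rightarrow> real) \<Rightarrow> 'a topology \<Rightarrow> bool" where
  "divergence_jointly_convex M \<rho> T \<longleftrightarrow>
    (\<forall>\<nu>1\<in>prob_measures T. \<forall>\<nu>2\<in>prob_measures T. \<forall>\<mu>1\<in>prob_measures T. \<forall>\<mu>2\<in>prob_measures T. \<forall>t\<in>{0..1::real}.
       divergence M \<rho> T (mix_measure t \<nu>1 \<nu>2) (mix_measure t \<mu>1 \<mu>2)
         \<le> ereal t * divergence M \<rho> T \<nu>1 \<mu>1 + ereal (1 - t) * divergence M \<rho> T \<nu>2 \<mu>2)"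

definition rho_mu_concave :: "'w measure \<Rightarrow> (('w \<Rightarrow> real) \<Rightarrow> real) \<Rightarrow> 'a topology \<Rightarrow> bool" where
  "rho_mu_concave M \<rho> T \<longleftrightarrow>
    (\<forall>f\<in>bounded_borel_funs T. \<forall>\<mu>1\<in>prob_measures T. \<forall>\<mu>2\<in>prob_measures T. \<forall>t\<in>{0..1::real}.
       t * rho_mu M \<rho> T \<mu>1 f + (1 - t) * rho_mu M \<rho> T \<mu>2 f \<le> rho_mu M \<rho> T (mix_measure t \<mu>1 \<mu>2) f)"

definition rho_tilde_concave :: "'w measure \<Rightarrow> (('w \<Rightarrow> real) \<Rightarrow> real) \<Rightarrow> bool" where
  "rho_tilde_concave M \<rho> \<longleftrightarrow>
    (\<forall>m1\<in>compact_supp_prob. \<forall>m2\<in>compact_supp_prob. \<forall>t\<in>{0..1::real}.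
       t * rho_tilde M \<rho> m1 + (1 - t) * rho_tilde M \<rho> m2 \<le> rho_tilde M \<rho> (mix_measure t m1 m2))"

lemma le_divergence:
  "f \<in> bounded_borel_funs T \<Longrightarrow> ereal (integral\<^sup>L \<nu> f - rho_mu M \<rho> T \<mu> f) \<le> divergence M \<rho> T \<nu> \<mu>"
  unfolding divergence_def by (rule SUP_upper)

lemma integral_mix_measure_bounded_borel:
  assumes "\<nu>1 \<in> prob_measures T" "\<nu>2 \<in> prob_measures T" "t \<in> {0..1}" and f: "f \<in> bounded_borel_funs T"
  shows "integral\<^sup>L (mix_measure t \<nu>1 \<nu>2) f = t * integral\<^sup>L \<nu>1 f + (1 - t) * integral\<^sup>L \<nu>2 f"
proof -
  note \<nu>1 = prob_measuresD[OF assms(1)] and \<nu>2 = prob_measuresD[OF assms(2)]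
  obtain C where "\<forall>x\<in>topspace T. \<bar>f x\<bar> \<le> C" using bounded_borel_funsD(2)[OF f] by blast
  moreover have "f \<in> borel_measurable \<nu>1"
    using bounded_borel_funsD(1)[OF f] measurable_cong_sets[OF \<nu>1(2) refl] by blast
  ultimately show ?thesis
    using assms(3) \<nu>1 \<nu>2 by (intro integral_mix_measure[of t \<nu>2 \<nu>1 f C]) auto
qed

text \<open>The divergence is a supremum of functions that are affine in \<open>\<nu>\<close> and, by concavity of
  \<open>\<rho>\<^sub>\<mu>(f)\<close>, convex in \<open>\<mu>\<close>.\<close>

lemma divergence_jointly_convex_if_rho_mu_concave:
  assumes "rho_mu_concave M \<rho> T"
  shows "divergence_jointly_convex M \<rho> T"
  unfolding divergence_jointly_convex_def
proof (intro ballI)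
  fix \<nu>1 \<nu>2 \<mu>1 \<mu>2 t
  assume \<nu>: "\<nu>1 \<in> prob_measures T" "\<nu>2 \<in> prob_measures T"
    and \<mu>: "\<mu>1 \<in> prob_measures T" "\<mu>2 \<in> prob_measures T" and t: "t \<in> {0..1::real}"
  show "divergence M \<rho> T (mix_measure t \<nu>1 \<nu>2) (mix_measure t \<mu>1 \<mu>2)
      \<le> ereal t * divergence M \<rho> T \<nu>1 \<mu>1 + ereal (1 - t) * divergence M \<rho> T \<nu>2 \<mu>2"
    unfolding divergence_def[of M \<rho> T "mix_measure t \<nu>1 \<nu>2"]
  proof (rule SUP_least)
    fix f assume f: "f \<in> bounded_borel_funs T"
    define a1 where "a1 = integral\<^sup>L \<nu>1 f - rho_mu M \<rho> T \<mu>1 f"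
    define a2 where "a2 = integral\<^sup>L \<nu>2 f - rho_mu M \<rho> T \<mu>2 f"
    have "ereal (integral\<^sup>L (mix_measure t \<nu>1 \<nu>2) f - rho_mu M \<rho> T (mix_measure t \<mu>1 \<mu>2) f)
        \<le> ereal (t * a1 + (1 - t) * a2)"
      using assms f \<mu> t integral_mix_measure_bounded_borel[OF \<nu> t f]
      unfolding rho_mu_concave_def a1_def a2_def by (fastforce simp: algebra_simps)
    also have "\<dots> = ereal t * ereal a1 + ereal (1 - t) * ereal a2"
      by simp
    also have "\<dots> \<le> ereal t * divergence M \<rho> T \<nu>1 \<mu>1 + ereal (1 - t) * divergence M \<rho> T \<nu>2 \<mu>2"
      using t le_divergence[OF f, of \<nu>1 M \<rho> \<mu>1] le_divergence[OF f, of \<nu>2 M \<rho> \<mu>2]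
      unfolding a1_def a2_def by (intro add_mono ereal_mult_left_mono) auto
    finally show "ereal (integral\<^sup>L (mix_measure t \<nu>1 \<nu>2) f - rho_mu M \<rho> T (mix_measure t \<mu>1 \<mu>2) f)
        \<le> ereal t * divergence M \<rho> T \<nu>1 \<mu>1 + ereal (1 - t) * divergence M \<rho> T \<nu>2 \<mu>2" .
  qed
qed

context law_invariant_risk_measure_nonatomic
begin

lemma rho_mu_concave_if_rho_tilde_concave:
  assumes concave: "rho_tilde_concave M \<rho>" and T: "Polish_space T"
  shows "rho_mu_concave M \<rho> T"
  unfolding rho_mu_concave_def
proof (intro ballI)
  fix f \<mu>1 \<mu>2 t
  assume f: "f \<in> bounded_borel_funs T" and \<mu>: "\<mu>1 \<in> prob_measures T" "\<mu>2 \<in> prob_measures T"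
    and t: "t \<in> {0..1::real}"
  note \<mu>1 = prob_measuresD[OF \<mu>(1)] and \<mu>2 = prob_measuresD[OF \<mu>(2)]
  have "f \<in> \<mu>1 \<rightarrow>\<^sub>M borel"
    using bounded_borel_funsD(1)[OF f] measurable_cong_sets[OF \<mu>1(2) refl] by blast
  then have "distr (mix_measure t \<mu>1 \<mu>2) borel f = mix_measure t (distr \<mu>1 borel f) (distr \<mu>2 borel f)"
    using t \<mu>1 \<mu>2 by (intro distr_mix_measure) auto
  then show "t * rho_mu M \<rho> T \<mu>1 f + (1 - t) * rho_mu M \<rho> T \<mu>2 f \<le> rho_mu M \<rho> T (mix_measure t \<mu>1 \<mu>2) f"
    using concave t \<mu> mix_measure_in_prob_measures[OF \<mu> t] f
    by (simp add: rho_tilde_concave_def rho_mu_eq_rho_tilde[OF T] distr_bounded_borel_in_compact_supp_prob)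
qed

lemma rho_tilde_eq_rho_mu_clip:
  assumes "m \<in> compact_supp_prob" and "0 \<le> N" and "emeasure m (UNIV - {-N..N}) = 0"
  shows "rho_tilde M \<rho> m = rho_mu M \<rho> euclidean m (clip N)"
proof -
  have "sets m = sets borel" using assms(1) by (simp add: compact_supp_prob_def)
  then show ?thesis
    using assms compact_supp_probD(1) Polish_space_euclidean_real clip_in_bounded_borel_funs
    by (simp add: rho_mu_eq_rho_tilde distr_clip)
qed

lemma rho_tilde_concave_if_rho_mu_concave:
  assumes concave: "rho_mu_concave M \<rho> (euclidean :: real topology)"
  shows "rho_tilde_concave M \<rho>"
  unfolding rho_tilde_concave_def
proof (intro ballI)
  fix m1 m2 t assume m: "m1 \<in> compact_supp_prob" "m2 \<in> compact_supp_prob" and t: "t \<in> {0..1::real}"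
  obtain N where N: "0 \<le> N" "emeasure m1 (UNIV - {-N..N}) = 0" "emeasure m2 (UNIV - {-N..N}) = 0"
    using compact_supp_prob_common_bound[OF m] by blast
  have sets: "sets m2 = sets m1" using m by (simp add: compact_supp_prob_def)
  have "emeasure (mix_measure t m1 m2) (UNIV - {-N..N}) = 0"
    using t N sets by (simp add: emeasure_mix_measure)
  moreover have "mix_measure t m1 m2 \<in> compact_supp_prob"
    using m t N by (intro mix_measure_in_compact_supp_prob) auto
  ultimately show "t * rho_tilde M \<rho> m1 + (1 - t) * rho_tilde M \<rho> m2 \<le> rho_tilde M \<rho> (mix_measure t m1 m2)"
    using concave t m N compact_supp_probD(1) clip_in_bounded_borel_funs[OF N(1)]
    by (simp add: rho_tilde_eq_rho_mu_clip rho_mu_concave_def)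
qed

end


section \<open>Subgradients of convex functions of finitely many variables\<close>

text \<open>The one-dimensional step of the Hahn-Banach argument: a linear minorant on functions
  supported by \<open>A\<close> can be extended to \<open>insert e A\<close>, since every left difference quotient of \<open>g\<close>
  in direction \<open>e\<close> lies below every right one.\<close>

lemma convex_difference_quotients_le:
  fixes g :: "('a \<Rightarrow> real) \<Rightarrow> real"
  assumes convex: "\<And>u v t. 0 \<le> t \<Longrightarrow> t \<le> 1 \<Longrightarrow> g (\<lambda>x. t * u x + (1 - t) * v x) \<le> t * g u + (1 - t) * g v"
    and minorant: "\<And>h. (\<forall>x. x \<notin> A \<longrightarrow> h x = 0) \<Longrightarrow> (\<Sum>a\<in>A. w a * h a) \<le> g h"
    and h1: "\<forall>x. x \<notin> A \<longrightarrow> h1 x = 0" and h2: "\<forall>x. x \<notin> A \<longrightarrow> h2 x = 0"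
    and r: "0 < r" and s: "0 < s"
  shows "((\<Sum>a\<in>A. w a * h1 a) - g (\<lambda>x. h1 x - r * indicator {e} x)) / r
       \<le> (g (\<lambda>x. h2 x + s * indicator {e} x) - (\<Sum>a\<in>A. w a * h2 a)) / s"
proof -
  define \<tau> where "\<tau> = s / (r + s)"
  have \<tau>: "0 \<le> \<tau>" "\<tau> \<le> 1" "1 - \<tau> = r / (r + s)" using r s by (auto simp: \<tau>_def field_simps)
  have cancel: "(1 - \<tau>) * s - \<tau> * r = 0" using r s by (simp add: \<tau>_def field_simps)
  let ?u = "\<lambda>x. h1 x - r * indicator {e} x" and ?v = "\<lambda>x. h2 x + s * indicator {e} x"
  let ?h = "\<lambda>x. \<tau> * h1 x + (1 - \<tau>) * h2 x"
  have "\<tau> * ?u x + (1 - \<tau>) * ?v x = ?h x + ((1 - \<tau>) * s - \<tau> * r) * indicator {e} x" for x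
    by (simp add: algebra_simps)
  then have "(\<lambda>x. \<tau> * ?u x + (1 - \<tau>) * ?v x) = ?h"
    unfolding cancel by simp
  then have "g ?h \<le> \<tau> * g ?u + (1 - \<tau>) * g ?v"
    using convex[OF \<tau>(1,2), of ?u ?v] by simp
  moreover have "(\<Sum>a\<in>A. w a * ?h a) \<le> g ?h"
    using h1 h2 by (intro minorant) auto
  moreover have "(\<Sum>a\<in>A. w a * ?h a) = (\<Sum>a\<in>A. \<tau> * (w a * h1 a) + (1 - \<tau>) * (w a * h2 a))"
    by (intro sum.cong) (simp_all add: algebra_simps)
  then have "(\<Sum>a\<in>A. w a * ?h a) = \<tau> * (\<Sum>a\<in>A. w a * h1 a) + (1 - \<tau>) * (\<Sum>a\<in>A. w a * h2 a)"
    by (simp add: sum.distrib sum_distrib_left)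
  ultimately have "(r + s) * (\<tau> * (\<Sum>a\<in>A. w a * h1 a) + (1 - \<tau>) * (\<Sum>a\<in>A. w a * h2 a))
      \<le> (r + s) * (\<tau> * g ?u + (1 - \<tau>) * g ?v)"
    using r s by (intro mult_left_mono) auto
  moreover have "(r + s) * (\<tau> * a + (1 - \<tau>) * b) = s * a + r * b" for a b
  proof -
    have "(r + s) * \<tau> = s" "(r + s) * (1 - \<tau>) = r"
      using r s by (simp_all add: \<tau>_def field_simps)
    moreover have "(r + s) * (\<tau> * a + (1 - \<tau>) * b) = ((r + s) * \<tau>) * a + ((r + s) * (1 - \<tau>)) * b"
      by (simp add: algebra_simps)
    ultimately show ?thesis by simp
  qed
  ultimately have *: "s * (\<Sum>a\<in>A. w a * h1 a) + r * (\<Sum>a\<in>A. w a * h2 a) \<le> s * g ?u + r * g ?v"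
    by simp
  have "(a - b) / r \<le> (c - d) / s" if "s * a + r * d \<le> s * b + r * c" for a b c d
    using that r s by (simp add: field_simps)
  from this[OF *] show ?thesis .
qed

lemma convex_linear_minorant_insert:
  fixes g :: "('a \<Rightarrow> real) \<Rightarrow> real"
  assumes convex: "\<And>u v t. 0 \<le> t \<Longrightarrow> t \<le> 1 \<Longrightarrow> g (\<lambda>x. t * u x + (1 - t) * v x) \<le> t * g u + (1 - t) * g v"
    and w: "\<And>h. (\<forall>x. x \<notin> A \<longrightarrow> h x = 0) \<Longrightarrow> (\<Sum>a\<in>A. w a * h a) \<le> g h"
    and A: "finite A" "e \<notin> A"
  obtains c where "\<And>h. (\<forall>x. x \<notin> insert e A \<longrightarrow> h x = 0) \<Longrightarrow> (\<Sum>a\<in>insert e A. (w(e := c)) a * h a) \<le> g h"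
proof -
  let ?L = "\<lambda>h. \<Sum>a\<in>A. w a * h a"
  define P where "P = {(?L h - g (\<lambda>x. h x - r * indicator {e} x)) / r | h r. (\<forall>x. x \<notin> A \<longrightarrow> h x = 0) \<and> 0 < r}"
  have upper: "p \<le> (g (\<lambda>x. h x + s * indicator {e} x) - ?L h) / s"
    if "p \<in> P" "\<forall>x. x \<notin> A \<longrightarrow> h x = 0" "0 < s" for p h s
  proof -
    from that(1) obtain h1 r where p: "p = (?L h1 - g (\<lambda>x. h1 x - r * indicator {e} x)) / r"
      and h1: "\<forall>x. x \<notin> A \<longrightarrow> h1 x = 0" and r: "0 < r"
      unfolding P_def by blast
    show ?thesis
      unfolding p by (rule convex_difference_quotients_le[OF convex w h1 that(2) r that(3)])
  qed
  have P_ne: "P \<noteq> {}" unfolding P_def by (auto intro!: exI[of _ "\<lambda>x. 0"] exI[of _ 1])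
  have P_bdd: "bdd_above P" using upper[of _ "\<lambda>x. 0" 1] by (auto intro!: bdd_aboveI)
  \<comment> \<open>Any slope between the two families of difference quotients will do.\<close>
  define c where "c = Sup P"
  have "(\<Sum>a\<in>insert e A. (w(e := c)) a * h a) \<le> g h" if h: "\<forall>x. x \<notin> insert e A \<longrightarrow> h x = 0" for h
  proof -
    define h' where "h' = h(e := 0)"
    have h': "\<forall>x. x \<notin> A \<longrightarrow> h' x = 0" using h unfolding h'_def by auto
    have "?L h' = (\<Sum>a\<in>A. w a * h a)"
      unfolding h'_def using A(2) by (intro sum.cong) auto
    then have sum_eq: "(\<Sum>a\<in>insert e A. (w(e := c)) a * h a) = c * h e + ?L h'"
      using A by (simp add: sum.insert) (intro sum.cong, auto)
    have g_eq: "g (\<lambda>x. h' x + b * indicator {e} x) = g h" if "b = h e" for b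
      using that unfolding h'_def by (intro arg_cong[where f = g]) (auto simp: indicator_def)
    consider "0 < h e" | "h e < 0" | "h e = 0" by linarith
    then show ?thesis
    proof cases
      case 1
      have "c \<le> (g (\<lambda>x. h' x + h e * indicator {e} x) - ?L h') / h e"
        unfolding c_def by (rule cSup_least[OF P_ne]) (rule upper[OF _ h' 1])
      then show ?thesis using 1 sum_eq g_eq[OF refl] by (simp add: field_simps)
    next
      case 2
      have "(?L h' - g (\<lambda>x. h' x - (- h e) * indicator {e} x)) / (- h e) \<in> P"
        unfolding P_def using h' 2 by (intro CollectI exI[of _ h'] exI[of _ "- h e"]) simp
      then have "(?L h' - g (\<lambda>x. h' x - (- h e) * indicator {e} x)) / (- h e) \<le> c"
        unfolding c_def by (rule cSup_upper[OF _ P_bdd])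
      then show ?thesis using 2 sum_eq g_eq[of "- (- h e)"] by (simp add: field_simps)
    next
      case 3
      then have "h' = h" unfolding h'_def by auto
      then show ?thesis using sum_eq 3 w[OF h'] by simp
    qed
  qed
  then show thesis by (rule that)
qed

lemma convex_finite_support_subgradient:
  fixes g :: "('a \<Rightarrow> real) \<Rightarrow> real"
  assumes convex: "\<And>u v t. 0 \<le> t \<Longrightarrow> t \<le> 1 \<Longrightarrow> g (\<lambda>x. t * u x + (1 - t) * v x) \<le> t * g u + (1 - t) * g v"
    and g0: "g (\<lambda>x. 0) = 0" and "finite A"
  shows "\<exists>w. \<forall>h. (\<forall>x. x \<notin> A \<longrightarrow> h x = 0) \<longrightarrow> (\<Sum>a\<in>A. w a * h a) \<le> g h"
  using \<open>finite A\<close>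
proof (induction A rule: finite_induct)
  case empty
  show ?case
  proof (intro exI allI impI)
    fix h :: "'a \<Rightarrow> real" assume "\<forall>x. x \<notin> {} \<longrightarrow> h x = 0"
    then have "h = (\<lambda>x. 0)" by auto
    then show "(\<Sum>a\<in>{}. (\<lambda>_. 0) a * h a) \<le> g h" using g0 by simp
  qed
next
  case (insert e A)
  then obtain w where w: "\<And>h. (\<forall>x. x \<notin> A \<longrightarrow> h x = 0) \<Longrightarrow> (\<Sum>a\<in>A. w a * h a) \<le> g h"
    by blast
  obtain c where "\<And>h. (\<forall>x. x \<notin> insert e A \<longrightarrow> h x = 0) \<Longrightarrow> (\<Sum>a\<in>insert e A. (w(e := c)) a * h a) \<le> g h"
    using convex_linear_minorant_insert[OF convex w insert(1,2)] by blast
  then show ?case by (intro exI[of _ "w(e := c)"]) blast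
qed

lemma indicator_mult_in_bounded_borel_funs:
  fixes S :: "real set" and h :: "real \<Rightarrow> real"
  assumes "finite S"
  shows "(\<lambda>x. indicator S x * h x) \<in> bounded_borel_funs euclidean"
proof (rule bounded_borel_funs_euclideanI)
  have "(\<lambda>x. indicator S x * h x) = (\<lambda>x. \<Sum>s\<in>S. h s * indicator {s} x)"
    using assms by (auto simp: indicator_def sum.delta' intro!: ext)
  moreover have "(\<lambda>x. \<Sum>s\<in>S. h s * indicator {s} x) \<in> borel_measurable borel"
    by (intro borel_measurable_sum borel_measurable_times borel_measurable_const borel_measurable_indicator) simp_all
  ultimately show "(\<lambda>x. indicator S x * h x) \<in> borel_measurable borel"
    by simp
  show "\<bar>indicator S x * h x\<bar> \<le> (\<Sum>s\<in>S. \<bar>h s\<bar>)" for x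
    using assms by (auto simp: indicator_def intro: member_le_sum[where f = "\<lambda>s. \<bar>h s\<bar>"])
qed

lemma exists_finite_support_prob_measure:
  fixes w :: "real \<Rightarrow> real"
  assumes S: "finite S" and w: "\<And>a. a \<in> S \<Longrightarrow> 0 \<le> w a" "(\<Sum>a\<in>S. w a) = 1"
  obtains \<nu> where "\<nu> \<in> prob_measures euclidean"
    "\<And>h. h \<in> borel_measurable borel \<Longrightarrow> integral\<^sup>L \<nu> h = (\<Sum>a\<in>S. w a * h a)"
proof -
  define F where "F x = (if x \<in> S then w x else 0)" for x
  have F_nonneg: "0 \<le> F x" for x unfolding F_def using w(1) by auto
  have "(\<integral>\<^sup>+ x. ennreal (F x) \<partial>count_space UNIV) = (\<Sum>x\<in>S. ennreal (F x))"
    using S by (intro nn_integral_count_space') (auto simp: F_def)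
  also have "\<dots> = ennreal (\<Sum>x\<in>S. F x)"
    using F_nonneg by (simp add: sum_ennreal)
  also have "(\<Sum>x\<in>S. F x) = 1"
    using w(2) by (simp add: F_def)
  finally have F_sum: "(\<integral>\<^sup>+ x. ennreal (F x) \<partial>count_space UNIV) = 1"
    by simp
  define p where "p = embed_pmf F"
  have pmf_p: "pmf p x = F x" for x unfolding p_def by (rule pmf_embed_pmf[OF F_nonneg F_sum])
  have set_p: "set_pmf p \<subseteq> S" unfolding p_def set_embed_pmf[OF F_nonneg F_sum] F_def by auto
  define \<nu> where "\<nu> = distr (measure_pmf p) borel (\<lambda>x. x)"
  have "\<nu> \<in> prob_measures euclidean"
    unfolding prob_measures_def \<nu>_def by (simp add: measure_pmf.prob_space_distr)
  moreover have "integral\<^sup>L \<nu> h = (\<Sum>a\<in>S. w a * h a)" if "h \<in> borel_measurable borel" for h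
  proof -
    have "integral\<^sup>L \<nu> h = measure_pmf.expectation p h"
      unfolding \<nu>_def using that by (simp add: integral_distr)
    also have "\<dots> = (\<Sum>a\<in>S. h a * pmf p a)"
      using set_p by (intro integral_measure_pmf_real[OF S]) auto
    finally show ?thesis by (simp add: pmf_p F_def mult.commute)
  qed
  ultimately show thesis using that by blast
qed

context law_invariant_risk_measure
begin

text \<open>Positivity of the subgradient comes from monotonicity of \<open>\<rho>\<close>, its total mass one from
  cash additivity.\<close>

lemma finite_valued_probability_subgradient:
  fixes X :: "'a \<Rightarrow> real" and f :: "real \<Rightarrow> real"
  assumes S: "finite S" and X: "X \<in> borel_measurable M" and X_S: "AE \<omega> in M. X \<omega> \<in> S"
  obtains w where "\<And>a. a \<in> S \<Longrightarrow> 0 \<le> w a" "(\<Sum>a\<in>S. w a) = 1"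
    "\<And>h. (\<Sum>a\<in>S. w a * (h a - f a))
        \<le> \<rho> (\<lambda>\<omega>. indicator S (X \<omega>) * h (X \<omega>)) - \<rho> (\<lambda>\<omega>. indicator S (X \<omega>) * f (X \<omega>))"
proof -
  define \<Phi> where "\<Phi> h = \<rho> (\<lambda>\<omega>. indicator S (X \<omega>) * h (X \<omega>))" for h
  have Linf: "(\<lambda>\<omega>. indicator S (X \<omega>) * h (X \<omega>)) \<in> Linf M" for h
    using Linf_comp_bounded_borel[OF _ indicator_mult_in_bounded_borel_funs[OF S]] X by simp
  have convex: "\<Phi> (\<lambda>x. t * u x + (1 - t) * v x) \<le> t * \<Phi> u + (1 - t) * \<Phi> v" if "0 \<le> t" "t \<le> 1" for t u v
    using rho_convex[OF Linf Linf that, of u v] unfolding \<Phi>_def by (simp add: algebra_simps)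
  have mono: "\<Phi> u \<le> \<Phi> v" if "\<And>x. x \<in> S \<Longrightarrow> u x \<le> v x" for u v
    unfolding \<Phi>_def using that by (intro rho_mono Linf AE_I2) (simp add: indicator_def)
  have cash: "\<Phi> (\<lambda>x. u x + c) = \<Phi> u + c" for u c
  proof -
    have "\<Phi> (\<lambda>x. u x + c) = \<rho> (\<lambda>\<omega>. indicator S (X \<omega>) * u (X \<omega>) + c)"
      unfolding \<Phi>_def using X_S by (intro rho_AE_cong Linf Linf_add_const) (auto elim!: eventually_mono)
    then show ?thesis unfolding \<Phi>_def by (simp add: rho_add_const[OF Linf])
  qed
  define g where "g h = \<Phi> (\<lambda>x. f x + h x) - \<Phi> f" for h
  have "g (\<lambda>x. t * u x + (1 - t) * v x) \<le> t * g u + (1 - t) * g v" if "0 \<le> t" "t \<le> 1" for t u v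
  proof -
    have "(\<lambda>x. f x + (t * u x + (1 - t) * v x)) = (\<lambda>x. t * (f x + u x) + (1 - t) * (f x + v x))"
      by (simp add: algebra_simps)
    then show ?thesis
      using convex[OF that, of "\<lambda>x. f x + u x" "\<lambda>x. f x + v x"] unfolding g_def by (simp add: algebra_simps)
  qed
  moreover have "g (\<lambda>x. 0) = 0" unfolding g_def by simp
  ultimately obtain w where w: "\<And>h. (\<forall>x. x \<notin> S \<longrightarrow> h x = 0) \<Longrightarrow> (\<Sum>a\<in>S. w a * h a) \<le> g h"
    using convex_finite_support_subgradient[OF _ _ S] by blast
  have sub: "(\<Sum>a\<in>S. w a * (h a - f a)) \<le> \<Phi> h - \<Phi> f" for h
  proof -
    define k where "k x = indicator S x * (h x - f x)" for x
    have "(\<Sum>a\<in>S. w a * (h a - f a)) = (\<Sum>a\<in>S. w a * k a)" by (simp add: k_def)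
    also have "\<dots> \<le> g k" by (rule w) (simp add: k_def)
    also have "\<Phi> (\<lambda>x. f x + k x) = \<Phi> h"
      unfolding \<Phi>_def k_def by (rule arg_cong[where f = \<rho>]) (auto simp: indicator_def)
    then have "g k = \<Phi> h - \<Phi> f" by (simp add: g_def)
    finally show ?thesis .
  qed
  have "0 \<le> w s" if "s \<in> S" for s
  proof -
    have "- w s = (\<Sum>a\<in>S. w a * ((f a - indicator {s} a) - f a))"
      using S that by (simp add: indicator_def sum.delta' sum_negf)
    also have "\<dots> \<le> \<Phi> (\<lambda>x. f x - indicator {s} x) - \<Phi> f" by (rule sub)
    also have "\<dots> \<le> 0" using mono[of "\<lambda>x. f x - indicator {s} x" f] by simp
    finally show ?thesis by simp
  qed
  moreover have "(\<Sum>a\<in>S. w a) = 1"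
    using sub[of "\<lambda>x. f x + 1"] sub[of "\<lambda>x. f x + - 1"] cash[of f 1] cash[of f "- 1"]
    by (simp add: sum_negf)
  ultimately show thesis using that sub unfolding \<Phi>_def by blast
qed

end


context law_invariant_risk_measure_nonatomic
begin

lemma divergence_attained_finite_support:
  fixes f :: "real \<Rightarrow> real"
  assumes m: "m \<in> prob_measures euclidean" and S: "finite S" "emeasure m (UNIV - S) = 0"
    and f: "f \<in> bounded_borel_funs euclidean"
  obtains \<nu> where "\<nu> \<in> prob_measures euclidean"
    "divergence M \<rho> euclidean \<nu> m = ereal (integral\<^sup>L \<nu> f - rho_mu M \<rho> euclidean m f)"
proof -
  obtain X where X: "X \<in> borel_measurable M" and law: "distr M borel X = m"
    using exists_random_variable_with_law[OF prob_space_axioms nonatomic standard_borel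
        Polish_space_euclidean_real m] by auto
  have "S \<in> sets borel" using S(1) by (simp add: finite_imp_closed borel_closed)
  then have "emeasure M (X -` (UNIV - S) \<inter> space M) = 0"
    using S(2) X unfolding law[symmetric] by (simp add: emeasure_distr)
  then have X_S: "AE \<omega> in M. X \<omega> \<in> S"
    using \<open>S \<in> sets borel\<close> X by (intro AE_I'[of "X -` (UNIV - S) \<inter> space M"]) (auto simp: null_sets_def)
  define \<Phi> where "\<Phi> h = \<rho> (\<lambda>\<omega>. indicator S (X \<omega>) * h (X \<omega>))" for h
  have rho_mu_\<Phi>: "rho_mu M \<rho> euclidean m h = \<Phi> h" if h: "h \<in> bounded_borel_funs euclidean" for h
  proof -
    have "rho_mu M \<rho> euclidean m h = \<rho> (\<lambda>\<omega>. h (X \<omega>))"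
      using X law h by (intro rho_mu_eq_rho_comp) simp_all
    also have "\<dots> = \<Phi> h"
      unfolding \<Phi>_def
    proof (rule rho_AE_cong)
      show "(\<lambda>\<omega>. h (X \<omega>)) \<in> Linf M"
        using Linf_comp_bounded_borel[of X M euclidean h] X h by simp
      show "(\<lambda>\<omega>. indicator S (X \<omega>) * h (X \<omega>)) \<in> Linf M"
        using Linf_comp_bounded_borel[OF _ indicator_mult_in_bounded_borel_funs[OF S(1)], of X M h] X by simp
      show "AE \<omega> in M. h (X \<omega>) = indicator S (X \<omega>) * h (X \<omega>)"
        using X_S by (auto elim!: eventually_mono)
    qed
    finally show ?thesis .
  qed
  obtain w where w: "\<And>a. a \<in> S \<Longrightarrow> 0 \<le> w a" "(\<Sum>a\<in>S. w a) = 1"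
      and sub: "\<And>h. (\<Sum>a\<in>S. w a * (h a - f a)) \<le> \<Phi> h - \<Phi> f"
    using finite_valued_probability_subgradient[OF S(1) X X_S, of f] unfolding \<Phi>_def by blast
  obtain \<nu> where \<nu>: "\<nu> \<in> prob_measures euclidean"
      and integral: "\<And>h. h \<in> borel_measurable borel \<Longrightarrow> integral\<^sup>L \<nu> h = (\<Sum>a\<in>S. w a * h a)"
    using exists_finite_support_prob_measure[OF S(1) w] by blast
  have "divergence M \<rho> euclidean \<nu> m = ereal (integral\<^sup>L \<nu> f - rho_mu M \<rho> euclidean m f)"
    unfolding divergence_def
  proof (rule antisym)
    show "(SUP h\<in>bounded_borel_funs euclidean. ereal (integral\<^sup>L \<nu> h - rho_mu M \<rho> euclidean m h))
        \<le> ereal (integral\<^sup>L \<nu> f - rho_mu M \<rho> euclidean m f)"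
    proof (rule SUP_least)
      fix h :: "real \<Rightarrow> real" assume h: "h \<in> bounded_borel_funs euclidean"
      have "(\<Sum>a\<in>S. w a * h a) - \<Phi> h \<le> (\<Sum>a\<in>S. w a * f a) - \<Phi> f"
        using sub[of h] by (simp add: algebra_simps sum_subtractf)
      then show "ereal (integral\<^sup>L \<nu> h - rho_mu M \<rho> euclidean m h) \<le> ereal (integral\<^sup>L \<nu> f - rho_mu M \<rho> euclidean m f)"
        using bounded_borel_funsD(1)[OF h] bounded_borel_funsD(1)[OF f] h f
        by (simp add: integral rho_mu_\<Phi>)
    qed
    show "ereal (integral\<^sup>L \<nu> f - rho_mu M \<rho> euclidean m f)
        \<le> (SUP h\<in>bounded_borel_funs euclidean. ereal (integral\<^sup>L \<nu> h - rho_mu M \<rho> euclidean m h))"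
      using f by (rule SUP_upper)
  qed
  with \<nu> show thesis by (rule that)
qed

text \<open>For finitely supported laws the supremum defining the divergence is attained, so joint
  convexity of the divergence transfers to concavity of \<open>\<rho>\<^sub>\<mu>(f)\<close>.\<close>

lemma rho_mu_concave_finite_support:
  fixes m1 m2 :: "real measure" and f :: "real \<Rightarrow> real"
  assumes J: "divergence_jointly_convex M \<rho> (euclidean :: real topology)"
    and m: "m1 \<in> prob_measures euclidean" "m2 \<in> prob_measures euclidean"
    and S: "finite S" "emeasure m1 (UNIV - S) = 0" "emeasure m2 (UNIV - S) = 0"
    and f: "f \<in> bounded_borel_funs euclidean" and t: "t \<in> {0..1::real}"
  shows "t * rho_mu M \<rho> euclidean m1 f + (1 - t) * rho_mu M \<rho> euclidean m2 f
      \<le> rho_mu M \<rho> euclidean (mix_measure t m1 m2) f"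
proof -
  obtain \<nu>1 where \<nu>1: "\<nu>1 \<in> prob_measures euclidean"
    "divergence M \<rho> euclidean \<nu>1 m1 = ereal (integral\<^sup>L \<nu>1 f - rho_mu M \<rho> euclidean m1 f)"
    using divergence_attained_finite_support[OF m(1) S(1,2) f] by blast
  obtain \<nu>2 where \<nu>2: "\<nu>2 \<in> prob_measures euclidean"
    "divergence M \<rho> euclidean \<nu>2 m2 = ereal (integral\<^sup>L \<nu>2 f - rho_mu M \<rho> euclidean m2 f)"
    using divergence_attained_finite_support[OF m(2) S(1,3) f] by blast
  have "ereal (integral\<^sup>L (mix_measure t \<nu>1 \<nu>2) f - rho_mu M \<rho> euclidean (mix_measure t m1 m2) f)
      \<le> divergence M \<rho> euclidean (mix_measure t \<nu>1 \<nu>2) (mix_measure t m1 m2)"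
    using f by (rule le_divergence)
  also have "\<dots> \<le> ereal t * divergence M \<rho> euclidean \<nu>1 m1 + ereal (1 - t) * divergence M \<rho> euclidean \<nu>2 m2"
    using J \<nu>1(1) \<nu>2(1) m t unfolding divergence_jointly_convex_def by blast
  finally show ?thesis
    using \<nu>1(2) \<nu>2(2) integral_mix_measure_bounded_borel[OF \<nu>1(1) \<nu>2(1) t f]
    by (simp add: algebra_simps)
qed

end


section \<open>Approximation by finitely valued random variables\<close>

definition grid_floor :: "nat \<Rightarrow> real \<Rightarrow> real \<Rightarrow> real" where
  "grid_floor n N x = \<lfloor>real (Suc n) * clip N x\<rfloor> / real (Suc n)"

lemma borel_measurable_grid_floor [measurable]: "grid_floor n N \<in> borel_measurable borel"
  unfolding grid_floor_def by measurable

lemma floor_scaled_bounds: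
  fixes y :: real
  shows "\<lfloor>real (Suc n) * y\<rfloor> / real (Suc n) \<le> y" "y - 1 / real (Suc n) \<le> \<lfloor>real (Suc n) * y\<rfloor> / real (Suc n)"
proof -
  have k: "0 < real (Suc n)" by simp
  have "real_of_int \<lfloor>real (Suc n) * y\<rfloor> \<le> real (Suc n) * y" by linarith
  then show "\<lfloor>real (Suc n) * y\<rfloor> / real (Suc n) \<le> y"
    using k by (simp add: pos_divide_le_eq mult.commute)
  have "real (Suc n) * y - 1 \<le> real_of_int \<lfloor>real (Suc n) * y\<rfloor>" by linarith
  then have "(real (Suc n) * y - 1) / real (Suc n) \<le> \<lfloor>real (Suc n) * y\<rfloor> / real (Suc n)"
    using k by (intro divide_right_mono) auto
  moreover have "(real (Suc n) * y - 1) / real (Suc n) = y - 1 / real (Suc n)"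
    using k by (simp add: diff_divide_distrib)
  ultimately show "y - 1 / real (Suc n) \<le> \<lfloor>real (Suc n) * y\<rfloor> / real (Suc n)" by simp
qed

lemma grid_floor_bounds:
  assumes "\<bar>x\<bar> \<le> N"
  shows "grid_floor n N x \<le> x" "x - 1 / real (Suc n) \<le> grid_floor n N x"
  unfolding grid_floor_def clip_eq_self[OF assms] by (rule floor_scaled_bounds)+

lemma abs_grid_floor_le:
  assumes "0 \<le> N"
  shows "\<bar>grid_floor n N x\<bar> \<le> N + 1"
proof -
  have "1 / real (Suc n) \<le> 1" by simp
  then show ?thesis
    using floor_scaled_bounds[where y = "clip N x" and n = n] abs_clip_le[OF assms, of x]
    unfolding grid_floor_def abs_le_iff by linarith
qed

lemma grid_floor_in_finite_grid:
  assumes "0 \<le> N"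
  shows "grid_floor n N x \<in> (\<lambda>k. real_of_int k / real (Suc n)) ` {\<lfloor>- (real (Suc n) * N)\<rfloor>..\<lfloor>real (Suc n) * N\<rfloor>}"
proof -
  have "- N \<le> clip N x" "clip N x \<le> N"
    using abs_clip_le[OF assms, of x] by (simp_all add: abs_le_iff)
  then have "- (real (Suc n) * N) \<le> real (Suc n) * clip N x" "real (Suc n) * clip N x \<le> real (Suc n) * N"
    using mult_left_mono[of "- N" "clip N x" "real (Suc n)"] mult_left_mono[of "clip N x" N "real (Suc n)"]
    by simp_all
  then show ?thesis
    unfolding grid_floor_def by (auto intro!: imageI floor_mono)
qed

lemma AE_mem_if_distr_null:
  fixes X :: "'a \<Rightarrow> real"
  assumes X: "X \<in> borel_measurable M" and A: "A \<in> sets borel"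
    and null: "emeasure (distr M borel X) (UNIV - A) = 0"
  shows "AE \<omega> in M. X \<omega> \<in> A"
proof (rule AE_I')
  have "emeasure M (X -` (UNIV - A) \<inter> space M) = 0"
    using null X A by (simp add: emeasure_distr)
  moreover have "X -` (UNIV - A) \<inter> space M \<in> sets M"
    using X A by measurable
  ultimately show "X -` (UNIV - A) \<inter> space M \<in> null_sets M"
    by (simp add: null_sets_def)
qed auto

context law_invariant_risk_measure
begin

lemma rho_grid_floor_bounds:
  assumes X: "X \<in> borel_measurable M" and bound: "AE \<omega> in M. \<bar>X \<omega>\<bar> \<le> N" and "0 \<le> N"
  shows "\<rho> X - 1 / real (Suc n) \<le> \<rho> (\<lambda>\<omega>. grid_floor n N (X \<omega>))" "\<rho> (\<lambda>\<omega>. grid_floor n N (X \<omega>)) \<le> \<rho> X"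
proof -
  have X_Linf: "X \<in> Linf M" unfolding Linf_def using X bound by blast
  have D_Linf: "(\<lambda>\<omega>. grid_floor n N (X \<omega>)) \<in> Linf M"
    using X abs_grid_floor_le[OF \<open>0 \<le> N\<close>] by (intro Linf_bounded) auto
  show "\<rho> (\<lambda>\<omega>. grid_floor n N (X \<omega>)) \<le> \<rho> X"
    using bound by (intro rho_mono D_Linf X_Linf) (auto elim!: eventually_mono intro: grid_floor_bounds)
  have "\<rho> X - 1 / real (Suc n) = \<rho> (\<lambda>\<omega>. X \<omega> + - (1 / real (Suc n)))"
    by (simp only: rho_add_const[OF X_Linf])
  also have "\<dots> \<le> \<rho> (\<lambda>\<omega>. grid_floor n N (X \<omega>))"
    using bound grid_floor_bounds(2)
    by (intro rho_mono Linf_add_const X_Linf D_Linf) (auto elim!: eventually_mono)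
  finally show "\<rho> X - 1 / real (Suc n) \<le> \<rho> (\<lambda>\<omega>. grid_floor n N (X \<omega>))" .
qed

end


context law_invariant_risk_measure_nonatomic
begin

lemma rho_concave_finite_valued:
  fixes X1 X2 Y :: "'a \<Rightarrow> real"
  assumes J: "divergence_jointly_convex M \<rho> (euclidean :: real topology)" and S: "finite S"
    and X: "X1 \<in> borel_measurable M" "X2 \<in> borel_measurable M" "\<And>\<omega>. X1 \<omega> \<in> S" "\<And>\<omega>. X2 \<omega> \<in> S"
    and Y: "Y \<in> borel_measurable M" "distr M borel Y = mix_measure t (distr M borel X1) (distr M borel X2)"
    and t: "t \<in> {0..1}"
  shows "t * \<rho> X1 + (1 - t) * \<rho> X2 \<le> \<rho> Y"
proof -
  define C where "C = (\<Sum>s\<in>S. \<bar>s\<bar>)"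
  have C: "\<bar>x\<bar> \<le> C" if "x \<in> S" for x
    unfolding C_def using S that by (auto intro: member_le_sum)
  then have "0 \<le> C" using X(3) by fastforce
  have S_borel: "S \<in> sets borel" using S by (simp add: finite_imp_closed borel_closed)
  have law: "distr M borel Z \<in> prob_measures euclidean"
    "rho_mu M \<rho> euclidean (distr M borel Z) (clip C) = \<rho> Z"
    if Z: "Z \<in> borel_measurable M" and null: "emeasure (distr M borel Z) (UNIV - S) = 0" for Z
  proof -
    show "distr M borel Z \<in> prob_measures euclidean"
      using Z by (simp add: prob_measures_def prob_space_distr)
    have Z_S: "AE \<omega> in M. Z \<omega> \<in> S" by (rule AE_mem_if_distr_null[OF Z S_borel null])
    have Z_Linf: "Z \<in> Linf M"
      unfolding Linf_def using Z Z_S C by (auto intro!: exI[of _ C] elim!: eventually_mono)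
    have "rho_mu M \<rho> euclidean (distr M borel Z) (clip C) = \<rho> (\<lambda>\<omega>. clip C (Z \<omega>))"
      using Z clip_in_bounded_borel_funs[OF \<open>0 \<le> C\<close>] by (intro rho_mu_eq_rho_comp) simp_all
    also have "\<dots> = \<rho> Z"
    proof (rule rho_AE_cong)
      show "(\<lambda>\<omega>. clip C (Z \<omega>)) \<in> Linf M"
        using Z abs_clip_le[OF \<open>0 \<le> C\<close>] by (intro Linf_bounded) auto
      show "AE \<omega> in M. clip C (Z \<omega>) = Z \<omega>"
        using Z_S C clip_eq_self by (auto elim!: eventually_mono)
    qed (rule Z_Linf)
    finally show "rho_mu M \<rho> euclidean (distr M borel Z) (clip C) = \<rho> Z" .
  qed
  have null: "emeasure (distr M borel Z) (UNIV - S) = 0" if "Z \<in> borel_measurable M" "\<And>\<omega>. Z \<omega> \<in> S" for Z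
    using that S_borel by (simp add: emeasure_distr vimage_def Diff_eq)
  have null_Y: "emeasure (distr M borel Y) (UNIV - S) = 0"
    using t null[OF X(1,3)] null[OF X(2,4)] by (simp add: Y(2) emeasure_mix_measure)
  show ?thesis
    using rho_mu_concave_finite_support[OF J law(1)[OF X(1) null[OF X(1,3)]] law(1)[OF X(2) null[OF X(2,4)]]
        S null[OF X(1,3)] null[OF X(2,4)] clip_in_bounded_borel_funs[OF \<open>0 \<le> C\<close>] t]
      law(2)[OF X(1) null[OF X(1,3)]] law(2)[OF X(2) null[OF X(2,4)]] law(2)[OF Y(1) null_Y]
    by (simp add: Y(2))
qed

lemma rho_concave_bounded:
  fixes X1 X2 Y :: "'a \<Rightarrow> real"
  assumes J: "divergence_jointly_convex M \<rho> (euclidean :: real topology)" and "0 \<le> N"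
    and X1: "X1 \<in> borel_measurable M" "AE \<omega> in M. \<bar>X1 \<omega>\<bar> \<le> N"
    and X2: "X2 \<in> borel_measurable M" "AE \<omega> in M. \<bar>X2 \<omega>\<bar> \<le> N"
    and Y: "Y \<in> borel_measurable M" "AE \<omega> in M. \<bar>Y \<omega>\<bar> \<le> N"
      "distr M borel Y = mix_measure t (distr M borel X1) (distr M borel X2)"
    and t: "t \<in> {0..1}"
  shows "t * \<rho> X1 + (1 - t) * \<rho> X2 \<le> \<rho> Y"
proof -
  have affine_combination_diff: "t * (a - d) + (1 - t) * (b - d) = t * a + (1 - t) * b - d" for a b d :: real
    by (simp add: algebra_simps)
  have "t * \<rho> X1 + (1 - t) * \<rho> X2 \<le> \<rho> Y + e" if "0 < e" for e
  proof -
    obtain n where n: "1 / real (Suc n) < e" using nat_approx_posE[OF \<open>0 < e\<close>] by blast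
    define D where "D = grid_floor n N"
    define G where "G = (\<lambda>k. real_of_int k / real (Suc n)) ` {\<lfloor>- (real (Suc n) * N)\<rfloor>..\<lfloor>real (Suc n) * N\<rfloor>}"
    have G: "finite G" "\<And>x. D x \<in> G"
      unfolding G_def D_def using grid_floor_in_finite_grid[OF \<open>0 \<le> N\<close>] by simp_all
    have D: "D \<in> borel_measurable borel" unfolding D_def by (rule borel_measurable_grid_floor)
    have DX: "(\<lambda>\<omega>. D (X \<omega>)) \<in> borel_measurable M" if "X \<in> borel_measurable M" for X
      using measurable_compose[OF that D] .
    have sets: "sets (distr M borel X2) = sets (distr M borel X1)" by simp
    have "distr M borel (\<lambda>\<omega>. D (Y \<omega>)) = distr (distr M borel Y) borel D"
      using distr_distr[OF D Y(1)] by (simp add: comp_def)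
    also have "\<dots> = mix_measure t (distr (distr M borel X1) borel D) (distr (distr M borel X2) borel D)"
      unfolding Y(3) using t D by (intro distr_mix_measure[OF _ _ sets]) auto
    also have "\<dots> = mix_measure t (distr M borel (\<lambda>\<omega>. D (X1 \<omega>))) (distr M borel (\<lambda>\<omega>. D (X2 \<omega>)))"
      using distr_distr[OF D X1(1)] distr_distr[OF D X2(1)] by (simp add: comp_def)
    finally have "t * \<rho> (\<lambda>\<omega>. D (X1 \<omega>)) + (1 - t) * \<rho> (\<lambda>\<omega>. D (X2 \<omega>)) \<le> \<rho> (\<lambda>\<omega>. D (Y \<omega>))"
      by (intro rho_concave_finite_valued[OF J G(1) DX[OF X1(1)] DX[OF X2(1)] G(2) G(2) DX[OF Y(1)] _ t])
    moreover have "t * (\<rho> X1 - 1 / real (Suc n)) \<le> t * \<rho> (\<lambda>\<omega>. D (X1 \<omega>))"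
      using t rho_grid_floor_bounds(1)[OF X1 \<open>0 \<le> N\<close>, of n] unfolding D_def by (intro mult_left_mono) auto
    moreover have "(1 - t) * (\<rho> X2 - 1 / real (Suc n)) \<le> (1 - t) * \<rho> (\<lambda>\<omega>. D (X2 \<omega>))"
      using t rho_grid_floor_bounds(1)[OF X2 \<open>0 \<le> N\<close>, of n] unfolding D_def by (intro mult_left_mono) auto
    moreover have "\<rho> (\<lambda>\<omega>. D (Y \<omega>)) \<le> \<rho> Y"
      using rho_grid_floor_bounds(2)[OF Y(1,2) \<open>0 \<le> N\<close>, of n] unfolding D_def .
    moreover have "t * (\<rho> X1 - 1 / real (Suc n)) + (1 - t) * (\<rho> X2 - 1 / real (Suc n))
        = t * \<rho> X1 + (1 - t) * \<rho> X2 - 1 / real (Suc n)"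
      by (rule affine_combination_diff)
    ultimately show ?thesis using n by linarith
  qed
  then show ?thesis by (rule field_le_epsilon)
qed

lemma rho_tilde_concave_if_divergence_jointly_convex:
  assumes J: "divergence_jointly_convex M \<rho> (euclidean :: real topology)"
  shows "rho_tilde_concave M \<rho>"
  unfolding rho_tilde_concave_def
proof (intro ballI)
  fix m1 m2 t assume m: "m1 \<in> compact_supp_prob" "m2 \<in> compact_supp_prob" and t: "t \<in> {0..1::real}"
  obtain N where N: "0 \<le> N" "emeasure m1 (UNIV - {-N..N}) = 0" "emeasure m2 (UNIV - {-N..N}) = 0"
    using compact_supp_prob_common_bound[OF m] by blast
  have sets: "sets m2 = sets m1" using m by (simp add: compact_supp_prob_def)
  let ?m = "mix_measure t m1 m2"
  have N_m: "emeasure ?m (UNIV - {-N..N}) = 0"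
    using t N sets by (simp add: emeasure_mix_measure)
  have m_csp: "?m \<in> compact_supp_prob"
    using m t N by (intro mix_measure_in_compact_supp_prob) auto
  have realize: "\<exists>X. X \<in> borel_measurable M \<and> distr M borel X = m' \<and> (AE \<omega> in M. \<bar>X \<omega>\<bar> \<le> N)
      \<and> rho_tilde M \<rho> m' = \<rho> X"
    if m': "m' \<in> compact_supp_prob" "emeasure m' (UNIV - {-N..N}) = 0" for m'
  proof -
    obtain X where X: "X \<in> borel_measurable M" "distr M borel X = m'"
      using exists_random_variable_with_law[OF prob_space_axioms nonatomic standard_borel
          Polish_space_euclidean_real compact_supp_probD(1)[OF m'(1)]] by auto
    have "AE \<omega> in M. X \<omega> \<in> {-N..N}"
      using m'(2) X(2) by (intro AE_mem_if_distr_null[OF X(1)]) simp_all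
    then have "AE \<omega> in M. \<bar>X \<omega>\<bar> \<le> N"
      by (auto elim!: eventually_mono simp: abs_le_iff)
    moreover from this have "X \<in> Linf M" unfolding Linf_def using X(1) by blast
    ultimately show ?thesis using X rho_tilde_eq_rho by blast
  qed
  obtain X1 where X1: "X1 \<in> borel_measurable M" "distr M borel X1 = m1" "AE \<omega> in M. \<bar>X1 \<omega>\<bar> \<le> N"
      "rho_tilde M \<rho> m1 = \<rho> X1"
    using realize[OF m(1) N(2)] by blast
  obtain X2 where X2: "X2 \<in> borel_measurable M" "distr M borel X2 = m2" "AE \<omega> in M. \<bar>X2 \<omega>\<bar> \<le> N"
      "rho_tilde M \<rho> m2 = \<rho> X2"
    using realize[OF m(2) N(3)] by blast
  obtain Y where Y: "Y \<in> borel_measurable M" "distr M borel Y = ?m" "AE \<omega> in M. \<bar>Y \<omega>\<bar> \<le> N"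
      "rho_tilde M \<rho> ?m = \<rho> Y"
    using realize[OF m_csp N_m] by blast
  show "t * rho_tilde M \<rho> m1 + (1 - t) * rho_tilde M \<rho> m2 \<le> rho_tilde M \<rho> ?m"
    using rho_concave_bounded[OF J N(1) X1(1,3) X2(1,3) Y(1,3) _ t] X1(2,4) X2(2,4) Y(2,4) by simp
qed

end

theorem proposition4p1:
  fixes M :: "'w measure" and \<rho> :: "('w \<Rightarrow> real) \<Rightarrow> real"
  assumes "prob_space M" and "nonatomic M" and "standard_borel M"
    and "risk_measure M \<rho>" and "law_invariant M \<rho>"
  shows "((\<forall>T :: real topology. Polish_space T \<longrightarrow>
            (\<forall>\<nu>1\<in>prob_measures T. \<forall>\<nu>2\<in>prob_measures T.
             \<forall>\<mu>1\<in>prob_measures T. \<forall>\<mu>2\<in>prob_measures T. \<forall>t\<in>{0..1::real}.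
               divergence M \<rho> T (mix_measure t \<nu>1 \<nu>2) (mix_measure t \<mu>1 \<mu>2)
                 \<le> ereal t * divergence M \<rho> T \<nu>1 \<mu>1
                   + ereal (1 - t) * divergence M \<rho> T \<nu>2 \<mu>2))
          \<longleftrightarrow>
          (\<forall>T :: real topology. Polish_space T \<longrightarrow>
            (\<forall>f\<in>bounded_borel_funs T.
             \<forall>\<mu>1\<in>prob_measures T. \<forall>\<mu>2\<in>prob_measures T. \<forall>t\<in>{0..1::real}.
               t * rho_mu M \<rho> T \<mu>1 f + (1 - t) * rho_mu M \<rho> T \<mu>2 f
                 \<le> rho_mu M \<rho> T (mix_measure t \<mu>1 \<mu>2) f)))
       \<and> ((\<forall>T :: real topology. Polish_space T \<longrightarrow>
            (\<forall>f\<in>bounded_borel_funs T.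
             \<forall>\<mu>1\<in>prob_measures T. \<forall>\<mu>2\<in>prob_measures T. \<forall>t\<in>{0..1::real}.
               t * rho_mu M \<rho> T \<mu>1 f + (1 - t) * rho_mu M \<rho> T \<mu>2 f
                 \<le> rho_mu M \<rho> T (mix_measure t \<mu>1 \<mu>2) f))
          \<longleftrightarrow>
          (\<forall>m1\<in>compact_supp_prob. \<forall>m2\<in>compact_supp_prob. \<forall>t\<in>{0..1::real}.
             t * rho_tilde M \<rho> m1 + (1 - t) * rho_tilde M \<rho> m2
               \<le> rho_tilde M \<rho> (mix_measure t m1 m2)))"
proof -
  interpret law_invariant_risk_measure_nonatomic M \<rho>
    using assms by (simp add: law_invariant_risk_measure_nonatomic_def law_invariant_risk_measure_def
        law_invariant_risk_measure_nonatomic_axioms_def law_invariant_risk_measure_axioms_def)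
  have mu_tilde: "(\<forall>T :: real topology. Polish_space T \<longrightarrow> rho_mu_concave M \<rho> T) \<longleftrightarrow> rho_tilde_concave M \<rho>"
    using rho_mu_concave_if_rho_tilde_concave rho_tilde_concave_if_rho_mu_concave
      Polish_space_euclidean_real by blast
  have "(\<forall>T :: real topology. Polish_space T \<longrightarrow> divergence_jointly_convex M \<rho> T)
      \<longleftrightarrow> (\<forall>T :: real topology. Polish_space T \<longrightarrow> rho_mu_concave M \<rho> T)"
    using divergence_jointly_convex_if_rho_mu_concave rho_tilde_concave_if_divergence_jointly_convex
      mu_tilde Polish_space_euclidean_real by blast
  with mu_tilde show ?thesis
    unfolding divergence_jointly_convex_def rho_mu_concave_def rho_tilde_concave_def by blast
qed

end
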